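(* Let $W=I_2(5)$. Then $$\kappa^{(3)}_{\beta,\alpha}=S^{(0,3)}_\beta(y_\alpha y_\beta)-y_\alpha\,s_\beta s_\alpha s_\beta(y_\alpha),$$ $$\kappa^{(2)}_{\alpha,\beta}=-y_\beta\big\{s_\alpha(y_\alpha y_\beta)+s_\alpha s_\beta(y_\alpha y_\beta)-s_\beta s_\alpha(y_\alpha y_\beta)-s_\beta s_\alpha s_\beta(y_\alpha y_\beta)+y_\alpha s_\beta s_\alpha s_\beta(y_\alpha)-s_\alpha s_\beta(y_\alpha)\,s_\alpha s_\beta s_\alpha(y_\beta)\big\},$$ $$\begin{aligned}\kappa^{(1)}_{\beta,\alpha}=&-s_\beta(y_\alpha y_\beta)\,s_\beta s_\alpha s_\beta(y_\alpha)\big\{s_\beta s_\alpha s_\beta(y_\beta)-y_\alpha\big\}-y_\alpha y_\beta\,s_\alpha s_\beta(y_\alpha)\big\{s_\alpha s_\beta(y_\beta)-s_\alpha s_\beta s_\alpha(y_\beta)\big\}\\&-y_\alpha\,s_\beta(y_\alpha)\,s_\beta s_\alpha(y_\beta)\,s_\beta s_\alpha s_\beta(y_\alpha).\end{aligned}$$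
   Context: General setup: $W$ a finite real reflection group with root system $\Sigma$; $R$ an integral domain containing the ring $\mathcal{R}\subset\mathbb{R}$ generated by the coefficients of roots in the basis of simple roots; $F$ a one-dimensional commutative formal group law over $R$; $\mathcal{S}$ the formal root algebra (the quotient of the completed polynomial ring $R[[x_\lambda:\lambda\in\Lambda]]$, $\Lambda$ the lattice spanned by $\mathcal{R}$-multiples of roots, by the closed ideal generated by $x_0$ and the relations $x_{e_i\gamma+e_j\gamma'}=(e_ix_\gamma)+_F(e_jx_{\gamma'})$ for roots $\gamma,\gamma'$ and a fixed $\mathbb{Z}$-basis $(e_1=1,\dots,e_l)$ of $\mathcal{R}$), with $W$ acting by $w(x_\lambda)=x_{w(\lambda)}$; $\mathcal{Q}$ its localization at all $x_\gamma$; $\mathcal{Q}_W=\mathcal{Q}\otimes_RR[W]$ with left $\mathcal{Q}$-basis $\{\delta_w\}$ and product $(q\delta_w)(q'\delta_{w'})=q\,w(q')\delta_{ww'}$, $\mathbf 1=\delta_1$; $\delta_\gamma=\delta_{s_\gamma}$, $X_\gamma=\frac1{x_\gamma}(\mathbf 1-\delta_\gamma)$. Dihedral notation: $W=I_2(m)$ (here $m=5$), simple roots $\alpha,\beta$; $y_\gamma=1/x_\gamma\in\mathcal{Q}$; $W$ acts on products multiplicatively, $s(y_\gamma)=y_{s(\gamma)}$. $X^{(i)}_{\alpha\ldots}=X_\alpha X_\beta X_\alpha\cdots$ and $X^{(i)}_{\beta\ldots}$ ($i$ alternating factors); $s^{(i)}_{\beta\ldots}=s_\beta s_\alpha\cdots$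 ($i$ factors, identity for $i=0$); $S^{(0,3)}_\beta(u)=\sum_{k=0}^3s^{(k)}_{\beta\ldots}(u)$. The elements $\kappa^{(i)}_{\alpha,\beta},\kappa^{(i)}_{\beta,\alpha}\in\mathcal{Q}$ ($1\le i\le m-2$) are the unique elements with $X^{(m)}_{\alpha\ldots}-X^{(m)}_{\beta\ldots}=\sum_{i=1}^{m-2}\big(\kappa^{(i)}_{\alpha,\beta}X^{(i)}_{\alpha\ldots}-\kappa^{(i)}_{\beta,\alpha}X^{(i)}_{\beta\ldots}\big)$ (uniqueness holds because the elements $X_{I_w}$, one reduced sequence $I_w$ per $w\in W$, are linearly independent over $\mathcal{Q}$). *)

theory Defs
  imports Main
begin

text \<open>For W = I_2(5) with simple roots alpha, beta (angle 4 pi/5), the coefficients of the roots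
 in the basis of simple roots are 0, 1, phi with phi = 2 cos(pi/5) = (1 + sqrt 5)/2, so the ring
 generated by them is Z[phi].  An element (a,b) of type zphi stands for a + b*phi
 (phi^2 = phi + 1); its Z-basis is e_1 = 1, e_2 = phi.  Lambda, the lattice spanned by
 Z[phi]-multiples of roots, is Z[phi] alpha + Z[phi] beta; an element ((a,b),(c,d)) of type lat
 stands for (a + b phi) alpha + (c + d phi) beta.\<close>

type_synonym zphi = "int \<times> int"
type_synonym lat = "zphi \<times> zphi"

definition zp_add :: "zphi \<Rightarrow> zphi \<Rightarrow> zphi" where
  "zp_add x y = (fst x + fst y, snd x + snd y)"
definition zp_neg :: "zphi \<Rightarrow> zphi" where
  "zp_neg x = (- fst x, - snd x)"
definition zp_mul :: "zphi \<Rightarrow> zphi \<Rightarrow> zphi" where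
  "zp_mul x y = (fst x * fst y + snd x * snd y, fst x * snd y + snd x * fst y + snd x * snd y)"

definition e1 :: zphi where "e1 = (1, 0)"
definition e2 :: zphi where "e2 = (0, 1)"

definition zp_emb :: "'a::comm_ring_1 \<Rightarrow> zphi \<Rightarrow> 'a" where
  "zp_emb ph x = of_int (fst x) + of_int (snd x) * ph"

definition lat_add :: "lat \<Rightarrow> lat \<Rightarrow> lat" where
  "lat_add l m = (zp_add (fst l) (fst m), zp_add (snd l) (snd m))"
definition lat_smul :: "zphi \<Rightarrow> lat \<Rightarrow> lat" where
  "lat_smul c l = (zp_mul c (fst l), zp_mul c (snd l))"
definition lat_zero :: lat where "lat_zero = ((0,0),(0,0))"

definition alpha :: lat where "alpha = ((1,0),(0,0))"
definition beta :: lat where "beta = ((0,0),(1,0))"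

text \<open>simple reflections: s_alpha(beta) = beta + phi alpha, s_beta(alpha) = alpha + phi beta
 (Cartan integers -phi), extended Z[phi]-linearly to Lambda\<close>
definition s_alpha :: "lat \<Rightarrow> lat" where
  "s_alpha l = (zp_add (zp_neg (fst l)) (zp_mul (0,1) (snd l)), snd l)"
definition s_beta :: "lat \<Rightarrow> lat" where
  "s_beta l = (fst l, zp_add (zp_mul (0,1) (fst l)) (zp_neg (snd l)))"

fun alt :: "(lat \<Rightarrow> lat) \<Rightarrow> (lat \<Rightarrow> lat) \<Rightarrow> nat \<Rightarrow> (lat \<Rightarrow> lat)" where
  "alt a b 0 = id"
| "alt a b (Suc k) = a \<circ> alt b a k"

text \<open>the elements of W = I_2(5), listed once each by reduced words\<close>
definition Wlist :: "(lat \<Rightarrow> lat) list" where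
  "Wlist = map (alt s_alpha s_beta) [0..<6] @ map (alt s_beta s_alpha) [1..<5]"

definition Wgrp :: "(lat \<Rightarrow> lat) set" where "Wgrp = set Wlist"

definition roots :: "lat set" where
  "roots = (\<lambda>w. w alpha) ` Wgrp \<union> (\<lambda>w. w beta) ` Wgrp"

text \<open>A one-dimensional commutative formal group law F(u,v) = sum a_ij u^i v^j over R, given by
 its coefficients.\<close>

definition biv_one :: "nat \<Rightarrow> nat \<Rightarrow> 'a::comm_ring_1" where
  "biv_one i j = (if i = 0 \<and> j = 0 then 1 else 0)"
definition biv_mul :: "(nat \<Rightarrow> nat \<Rightarrow> 'a::comm_ring_1) \<Rightarrow> (nat \<Rightarrow> nat \<Rightarrow> 'a) \<Rightarrow> nat \<Rightarrow> nat \<Rightarrow> 'a" where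
  "biv_mul p q i j = (\<Sum>i1\<le>i. \<Sum>j1\<le>j. p i1 j1 * q (i - i1) (j - j1))"
fun biv_pow :: "(nat \<Rightarrow> nat \<Rightarrow> 'a::comm_ring_1) \<Rightarrow> nat \<Rightarrow> nat \<Rightarrow> nat \<Rightarrow> 'a" where
  "biv_pow p 0 = biv_one"
| "biv_pow p (Suc k) = biv_mul p (biv_pow p k)"

definition fgl :: "(nat \<Rightarrow> nat \<Rightarrow> 'a::comm_ring_1) \<Rightarrow> bool" where
  "fgl F \<longleftrightarrow>
     (\<forall>i. F i 0 = (if i = 1 then 1 else 0)) \<and>
     (\<forall>j. F 0 j = (if j = 1 then 1 else 0)) \<and>
     (\<forall>i j. F i j = F j i) \<and>
     \<comment> \<open>F(F(u,v),w) = F(u,F(v,w)), compared coefficientwise at u^i v^j w^n\<close>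
     (\<forall>i j n. (\<Sum>k\<le>i+j. F k n * biv_pow F k i j) = (\<Sum>l\<le>j+n. F i l * biv_pow F l j n))"

section \<open>The completed polynomial ring R[[x_lambda : lambda in Lambda]]\<close>

type_synonym mono = "lat \<Rightarrow> nat"
type_synonym 'a ser = "mono \<Rightarrow> 'a"

definition msupp :: "mono \<Rightarrow> lat set" where "msupp m = {l. m l \<noteq> 0}"
definition deg :: "mono \<Rightarrow> nat" where "deg m = sum m (msupp m)"

text \<open>elements of the completion of R[x_Lambda] at the augmentation ideal: formal sums of
 monomials with only finitely many monomials of each degree\<close>
definition cps :: "'a::comm_ring_1 ser \<Rightarrow> bool" where
  "cps f \<longleftrightarrow> (\<forall>m. f m \<noteq> 0 \<longrightarrow> finite (msupp m)) \<and> (\<forall>d. finite {m. f m \<noteq> 0 \<and> deg m = d})"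

definition ser_zero :: "'a::comm_ring_1 ser" where "ser_zero = (\<lambda>m. 0)"
definition ser_one :: "'a::comm_ring_1 ser" where "ser_one = (\<lambda>m. if m = (\<lambda>l. 0) then 1 else 0)"
definition ser_add :: "'a::comm_ring_1 ser \<Rightarrow> 'a ser \<Rightarrow> 'a ser" where
  "ser_add f g = (\<lambda>m. f m + g m)"
definition ser_neg :: "'a::comm_ring_1 ser \<Rightarrow> 'a ser" where
  "ser_neg f = (\<lambda>m. - f m)"
definition ser_diff :: "'a::comm_ring_1 ser \<Rightarrow> 'a ser \<Rightarrow> 'a ser" where
  "ser_diff f g = (\<lambda>m. f m - g m)"
definition ser_mul :: "'a::comm_ring_1 ser \<Rightarrow> 'a ser \<Rightarrow> 'a ser" where
  "ser_mul f g = (\<lambda>m. \<Sum>(m1, m2) \<in> {(m1, m2). \<forall>l. m1 l + m2 l = m l}. f m1 * g m2)"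
definition ser_var :: "lat \<Rightarrow> 'a::comm_ring_1 ser" where
  "ser_var l = (\<lambda>m. if m = (\<lambda>k. if k = l then 1 else 0) then 1 else 0)"
definition ser_xmono :: "mono \<Rightarrow> 'a::comm_ring_1 ser \<Rightarrow> 'a ser" where
  "ser_xmono e f = (\<lambda>m. if (\<forall>l. e l \<le> m l) then f (\<lambda>l. m l - e l) else 0)"
text \<open>the W-action w(x_lambda) = x_{w lambda}: the coefficient of x^m in w(f) is that of x^(m o w) in f\<close>
definition ser_act :: "(lat \<Rightarrow> lat) \<Rightarrow> 'a::comm_ring_1 ser \<Rightarrow> 'a ser" where
  "ser_act w f = (\<lambda>m. f (m \<circ> w))"

text \<open>F(c1 x_l, c2 x_k) = sum_{i,j} a_ij c1^i c2^j x_l^i x_k^j\<close>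
definition Fsub :: "(nat \<Rightarrow> nat \<Rightarrow> 'a::comm_ring_1) \<Rightarrow> 'a \<Rightarrow> lat \<Rightarrow> 'a \<Rightarrow> lat \<Rightarrow> 'a ser" where
  "Fsub F c1 l c2 k = (\<lambda>m. \<Sum>(i, j) \<in> {(i, j). i \<le> deg m \<and> j \<le> deg m \<and>
        m = (\<lambda>n. (if n = l then i else 0) + (if n = k then j else 0))}. F i j * c1 ^ i * c2 ^ j)"

text \<open>generators of the defining ideal of the formal root algebra: x_0 and
 x_{e_i g + e_j g'} - ((e_i x_g) +_F (e_j x_g')) for roots g, g' and i, j in {1,2}\<close>
definition root_gens :: "'a::comm_ring_1 \<Rightarrow> (nat \<Rightarrow> nat \<Rightarrow> 'a) \<Rightarrow> 'a ser set" where
  "root_gens ph F = {ser_var lat_zero} \<union>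
     {ser_diff (ser_var (lat_add (lat_smul ei g) (lat_smul ej g')))
               (Fsub F (zp_emb ph ei) g (zp_emb ph ej) g')
      | g g' ei ej. g \<in> roots \<and> g' \<in> roots \<and> ei \<in> {e1, e2} \<and> ej \<in> {e1, e2}}"

inductive_set gen_ideal :: "'a::comm_ring_1 ser set \<Rightarrow> 'a ser set" for G where
  gen_zero: "ser_zero \<in> gen_ideal G"
| gen_step: "g \<in> G \<Longrightarrow> cps c \<Longrightarrow> h \<in> gen_ideal G \<Longrightarrow> ser_add (ser_mul c g) h \<in> gen_ideal G"

text \<open>closure in the adic topology of the completed ring (basis of neighbourhoods of 0:
 series vanishing in degrees < n)\<close>
definition closed_ideal :: "'a::comm_ring_1 ser set \<Rightarrow> 'a ser set" where
  "closed_ideal G = {f. cps f \<and> (\<forall>n. \<exists>j \<in> gen_ideal G. \<forall>m. deg m < n \<longrightarrow> f m = j m)}"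

text \<open>the formal root algebra S = R[[x_Lambda]] / Jbar\<close>
definition Jbar :: "'a::comm_ring_1 \<Rightarrow> (nat \<Rightarrow> nat \<Rightarrow> 'a) \<Rightarrow> 'a ser set" where
  "Jbar ph F = closed_ideal (root_gens ph F)"

section \<open>Q = S localized at all x_gamma (gamma a root), via representatives\<close>

text \<open>a representative (f, e) stands for f / prod_gamma x_gamma^(e gamma)\<close>
type_synonym 'a qrep = "'a ser \<times> mono"

definition qrep_ok :: "'a::comm_ring_1 qrep \<Rightarrow> bool" where
  "qrep_ok q \<longleftrightarrow> cps (fst q) \<and> msupp (snd q) \<subseteq> roots"

definition qeq :: "'a::comm_ring_1 \<Rightarrow> (nat \<Rightarrow> nat \<Rightarrow> 'a) \<Rightarrow> 'a qrep \<Rightarrow> 'a qrep \<Rightarrow> bool" where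
  "qeq ph F p q \<longleftrightarrow> (\<exists>u. msupp u \<subseteq> roots \<and>
      ser_xmono u (ser_diff (ser_xmono (snd q) (fst p)) (ser_xmono (snd p) (fst q))) \<in> Jbar ph F)"

definition qzero :: "'a::comm_ring_1 qrep" where "qzero = (ser_zero, (\<lambda>l. 0))"
definition qone :: "'a::comm_ring_1 qrep" where "qone = (ser_one, (\<lambda>l. 0))"
definition qadd :: "'a::comm_ring_1 qrep \<Rightarrow> 'a qrep \<Rightarrow> 'a qrep" where
  "qadd p q = (ser_add (ser_xmono (snd q) (fst p)) (ser_xmono (snd p) (fst q)), (\<lambda>l. snd p l + snd q l))"
definition qneg :: "'a::comm_ring_1 qrep \<Rightarrow> 'a qrep" where
  "qneg p = (ser_neg (fst p), snd p)"
definition qsub :: "'a::comm_ring_1 qrep \<Rightarrow> 'a qrep \<Rightarrow> 'a qrep" where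
  "qsub p q = qadd p (qneg q)"
definition qmul :: "'a::comm_ring_1 qrep \<Rightarrow> 'a qrep \<Rightarrow> 'a qrep" where
  "qmul p q = (ser_mul (fst p) (fst q), (\<lambda>l. snd p l + snd q l))"
definition qsum :: "'a::comm_ring_1 qrep list \<Rightarrow> 'a qrep" where
  "qsum xs = foldr qadd xs qzero"
text \<open>y_gamma = 1 / x_gamma\<close>
definition qy :: "lat \<Rightarrow> 'a::comm_ring_1 qrep" where
  "qy g = (ser_one, (\<lambda>l. if l = g then 1 else 0))"
definition qact :: "(lat \<Rightarrow> lat) \<Rightarrow> 'a::comm_ring_1 qrep \<Rightarrow> 'a qrep" where
  "qact w p = (ser_act w (fst p), snd p \<circ> inv w)"

section \<open>The twisted group algebra Q_W = Q (x) R[W], elements sum_w q_w delta_w\<close>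

type_synonym 'a qw = "(lat \<Rightarrow> lat) \<Rightarrow> 'a qrep"

definition qw_eq :: "'a::comm_ring_1 \<Rightarrow> (nat \<Rightarrow> nat \<Rightarrow> 'a) \<Rightarrow> 'a qw \<Rightarrow> 'a qw \<Rightarrow> bool" where
  "qw_eq ph F P P' \<longleftrightarrow> (\<forall>w \<in> Wgrp. qeq ph F (P w) (P' w))"
definition qw_zero :: "'a::comm_ring_1 qw" where "qw_zero = (\<lambda>w. qzero)"
definition qw_add :: "'a::comm_ring_1 qw \<Rightarrow> 'a qw \<Rightarrow> 'a qw" where
  "qw_add P P' = (\<lambda>w. qadd (P w) (P' w))"
definition qw_sub :: "'a::comm_ring_1 qw \<Rightarrow> 'a qw \<Rightarrow> 'a qw" where
  "qw_sub P P' = (\<lambda>w. qsub (P w) (P' w))"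
definition qw_smul :: "'a::comm_ring_1 qrep \<Rightarrow> 'a qw \<Rightarrow> 'a qw" where
  "qw_smul q P = (\<lambda>w. qmul q (P w))"
definition qw_sum :: "'a::comm_ring_1 qw list \<Rightarrow> 'a qw" where
  "qw_sum xs = foldr qw_add xs qw_zero"
text \<open>(q delta_w)(q' delta_w') = q w(q') delta_{ww'}\<close>
definition qw_mul :: "'a::comm_ring_1 qw \<Rightarrow> 'a qw \<Rightarrow> 'a qw" where
  "qw_mul P P' = (\<lambda>u. qsum (map (\<lambda>w. qmul (P w) (qact w (P' (inv w \<circ> u)))) Wlist))"
definition qw_delta :: "(lat \<Rightarrow> lat) \<Rightarrow> 'a::comm_ring_1 qw" where
  "qw_delta w = (\<lambda>v. if v = w then qone else qzero)"
definition qw_X :: "lat \<Rightarrow> (lat \<Rightarrow> lat) \<Rightarrow> 'a::comm_ring_1 qw" where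
  "qw_X g s = qw_smul (qy g) (qw_sub (qw_delta id) (qw_delta s))"

definition X_alpha :: "'a::comm_ring_1 qw" where "X_alpha = qw_X alpha s_alpha"
definition X_beta :: "'a::comm_ring_1 qw" where "X_beta = qw_X beta s_beta"

text \<open>Xalt A B i = A B A ... (i factors); X^{(i)}_{alpha...} = Xalt X_alpha X_beta i\<close>
fun Xalt :: "'a::comm_ring_1 qw \<Rightarrow> 'a qw \<Rightarrow> nat \<Rightarrow> 'a qw" where
  "Xalt A B 0 = qw_delta id"
| "Xalt A B (Suc i) = qw_mul A (Xalt B A i)"

definition kappa_identity ::
  "'a::comm_ring_1 \<Rightarrow> (nat \<Rightarrow> nat \<Rightarrow> 'a) \<Rightarrow> (nat \<Rightarrow> 'a qrep) \<Rightarrow> (nat \<Rightarrow> 'a qrep) \<Rightarrow> bool" where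
  "kappa_identity ph F kab kba \<longleftrightarrow>
     qw_eq ph F (qw_sub (Xalt X_alpha X_beta 5) (Xalt X_beta X_alpha 5))
       (qw_sum (map (\<lambda>i. qw_sub (qw_smul (kab i) (Xalt X_alpha X_beta i))
                                 (qw_smul (kba i) (Xalt X_beta X_alpha i))) [1..<4]))"

text \<open>s^{(k)}_{beta...} = s_beta s_alpha ... (k factors), s^{(k)}_{alpha...} likewise\<close>
definition sbw :: "nat \<Rightarrow> lat \<Rightarrow> lat" where "sbw k = alt s_beta s_alpha k"
definition saw :: "nat \<Rightarrow> lat \<Rightarrow> lat" where "saw k = alt s_alpha s_beta k"

definition yab :: "'a::comm_ring_1 qrep" where "yab = qmul (qy alpha) (qy beta)"

text \<open>S^{(0,3)}_beta(u) = sum_{k=0}^{3} s^{(k)}_{beta...}(u)\<close>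
definition S03_beta :: "'a::comm_ring_1 qrep \<Rightarrow> 'a qrep" where
  "S03_beta u = qsum (map (\<lambda>k. qact (sbw k) u) [0..<4])"

end

theory Submission
  imports Defs "HOL-Library.FuncSet"
begin

text \<open>Everything is computed coefficientwise: an element of Q_W is a function from W to Q, and
  an element of Q is represented in the localization of the completed power series ring at the
  roots. Since X_gamma (sum_w q_w delta_w) has coefficient y_gamma q_w - y_gamma s_gamma(q_(s_gamma w))
  at w, the coefficients of X^(i) are explicit polynomials in the y of the ten roots, which can be
  evaluated at each of the ten elements of W, realised as 2x2 matrices over Z[phi].

  Existence: with the explicit kappas both sides of the defining identity have equal coefficients
  at every w. This is an identity between polynomials in the y_gamma.

  Uniqueness is triangularity: the coefficient of delta_w in X^(i) vanishes when w is longer than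
  i, and at w = s^(i)_(alpha...) the only word of length i with a nonzero coefficient is
  X^(i)_(alpha...), whose coefficient is a product of y's and hence a unit. Comparing coefficients
  at the elements of length 3, then 2, then 1 determines the kappas one at a time.\<close>

section \<open>Completed power series in the variables x_lambda\<close>

abbreviation fin_supp :: "mono \<Rightarrow> bool" where "fin_supp m \<equiv> finite (msupp m)"
definition splits :: "mono \<Rightarrow> (mono \<times> mono) set" where
  "splits m = {(m1, m2). \<forall>l. m1 l + m2 l = m l}"

lemma ser_mul_splits: "ser_mul f g m = (\<Sum>(m1, m2) \<in> splits m. f m1 * g m2)"
  unfolding ser_mul_def splits_def by simp

lemma splits_iff: "(a, b) \<in> splits m \<longleftrightarrow> (\<forall>l. a l \<le> m l) \<and> b = (\<lambda>l. m l - a l)"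
  unfolding splits_def fun_eq_iff
  by (simp del: split_paired_All) (metis add_diff_cancel_left' le_add1 le_add_diff_inverse)

lemma finite_monos_below:
  assumes "fin_supp m" shows "finite {m1::mono. \<forall>l. m1 l \<le> m l}"
proof -
  let ?S = "msupp m"
  have "{m1::mono. \<forall>l. m1 l \<le> m l} \<subseteq> (\<lambda>g l. if l \<in> ?S then g l else 0) ` (PiE ?S (\<lambda>l. {0..m l}))"
  proof
    fix m1 :: mono assume h: "m1 \<in> {m1. \<forall>l. m1 l \<le> m l}"
    hence h': "\<forall>l. m1 l \<le> m l" by simp
    have "m1 = (\<lambda>l. if l \<in> ?S then restrict m1 ?S l else 0)"
    proof
      fix l show "m1 l = (if l \<in> ?S then restrict m1 ?S l else 0)"
        using h'[rule_format, of l] by (auto simp: msupp_def)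
    qed
    moreover have "restrict m1 ?S \<in> PiE ?S (\<lambda>l. {0..m l})" using h' by auto
    ultimately show "m1 \<in> (\<lambda>g l. if l \<in> ?S then g l else 0) ` (PiE ?S (\<lambda>l. {0..m l}))" by blast
  qed
  moreover have "finite (PiE ?S (\<lambda>l. {0..m l}))" using assms by (intro finite_PiE) auto
  ultimately show ?thesis using finite_subset by blast
qed

lemma finite_splits: assumes "fin_supp m" shows "finite (splits m)"
proof -
  have "splits m \<subseteq> (\<lambda>m1. (m1, \<lambda>l. m l - m1 l)) ` {m1::mono. \<forall>l. m1 l \<le> m l}"
    by (auto simp: splits_iff simp del: split_paired_All)
  thus ?thesis using finite_monos_below[OF assms] finite_subset by blast
qed

lemma infinite_splits: assumes "\<not> fin_supp m" shows "infinite (splits m)"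
proof
  assume fD: "finite (splits m)"
  let ?f = "\<lambda>l. ((\<lambda>k. if k = l then m l else 0)::mono, (\<lambda>k. if k = l then 0 else m k)::mono)"
  have "inj_on ?f (msupp m)"
  proof (rule inj_onI)
    fix x y assume "x \<in> msupp m" "?f x = ?f y"
    hence "m x \<noteq> 0" "(\<lambda>k. if k = x then m x else 0) = (\<lambda>k. if k = y then m y else (0::nat))"
      by (auto simp: msupp_def)
    thus "x = y" using fun_cong[of _ _ x] by (metis (full_types))
  qed
  moreover have "?f ` msupp m \<subseteq> splits m" by (auto simp: splits_def)
  ultimately have "finite (?f ` msupp m)" using fD finite_subset by blast
  hence "finite (msupp m)" using \<open>inj_on ?f (msupp m)\<close> finite_imageD by blast
  thus False using assms by simp
qed

text \<open>Junk coefficients: at a monomial of infinite support the defining sum of ser_mul ranges over an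
  infinite set and is 0.\<close>
lemma ser_mul_infinite_supp: "\<not> fin_supp m \<Longrightarrow> ser_mul f g m = 0"
  unfolding ser_mul_splits using infinite_splits by simp

lemma msupp_add: "msupp (\<lambda>l. (a::mono) l + b l) = msupp a \<union> msupp b"
  by (auto simp: msupp_def)

lemma splits_fin_supp: "(a,b) \<in> splits m \<Longrightarrow> fin_supp m \<Longrightarrow> fin_supp a \<and> fin_supp b"
proof -
  assume "(a,b) \<in> splits m" "fin_supp m"
  hence "m = (\<lambda>l. a l + b l)" by (auto simp: splits_def)
  thus ?thesis using \<open>fin_supp m\<close> msupp_add by (metis finite_Un)
qed

lemma deg_eq_sum: "finite S \<Longrightarrow> msupp m \<subseteq> S \<Longrightarrow> deg m = sum m S"
  unfolding deg_def by (rule sum.mono_neutral_left) (auto simp: msupp_def)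

lemma deg_infinite_supp: "\<not> fin_supp m \<Longrightarrow> deg m = 0"
  unfolding deg_def by simp

lemma deg_add: "fin_supp a \<Longrightarrow> fin_supp b \<Longrightarrow> deg (\<lambda>l. a l + b l) = deg a + deg b"
proof -
  assume fa: "fin_supp a" and fb: "fin_supp b"
  let ?S = "msupp a \<union> msupp b"
  have "deg (\<lambda>l. a l + b l) = sum (\<lambda>l. a l + b l) ?S" using fa fb by (intro deg_eq_sum) (auto simp: msupp_def)
  also have "\<dots> = sum a ?S + sum b ?S" by (simp add: sum.distrib)
  also have "\<dots> = deg a + deg b" using fa fb deg_eq_sum[of ?S a] deg_eq_sum[of ?S b] by simp
  finally show ?thesis .
qed

lemma deg_splits: "(a,b) \<in> splits m \<Longrightarrow> fin_supp m \<Longrightarrow> deg m = deg a + deg b"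
proof -
  assume h: "(a,b) \<in> splits m" "fin_supp m"
  hence "m = (\<lambda>l. a l + b l)" by (auto simp: splits_def)
  thus ?thesis using deg_add splits_fin_supp[OF h] by metis
qed

lemma cps_zero: "cps (ser_zero :: 'a::comm_ring_1 ser)"
  by (simp add: cps_def ser_zero_def)

lemma cps_one: "cps (ser_one :: 'a::comm_ring_1 ser)"
proof -
  have "{m. ser_one m \<noteq> (0::'a) \<and> deg m = d} \<subseteq> {\<lambda>l. 0}" for d by (auto simp: ser_one_def)
  hence "finite {m. ser_one m \<noteq> (0::'a) \<and> deg m = d}" for d by (meson finite.emptyI finite_insert finite_subset)
  moreover have "msupp (\<lambda>l. 0) = {}" by (simp add: msupp_def)
  ultimately show ?thesis by (auto simp: cps_def ser_one_def)
qed

lemma cps_add: "cps f \<Longrightarrow> cps g \<Longrightarrow> cps (ser_add f g)"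
proof -
  assume f: "cps f" and g: "cps g"
  have "{m. ser_add f g m \<noteq> 0 \<and> deg m = d} \<subseteq> {m. f m \<noteq> 0 \<and> deg m = d} \<union> {m. g m \<noteq> 0 \<and> deg m = d}" for d
    by (auto simp: ser_add_def)
  hence "finite {m. ser_add f g m \<noteq> 0 \<and> deg m = d}" for d using f g unfolding cps_def by (meson finite_UnI finite_subset)
  moreover have "ser_add f g m \<noteq> 0 \<Longrightarrow> fin_supp m" for m using f g unfolding cps_def ser_add_def by force
  ultimately show ?thesis unfolding cps_def by blast
qed

lemma cps_neg: "cps f \<Longrightarrow> cps (ser_neg f)"
  unfolding cps_def ser_neg_def by simp

lemma cps_diff: "cps f \<Longrightarrow> cps g \<Longrightarrow> cps (ser_diff f g)"
proof -
  assume "cps f" "cps g"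
  hence "cps (ser_add f (ser_neg g))" by (simp add: cps_add cps_neg)
  moreover have "ser_add f (ser_neg g) = ser_diff f g" by (simp add: ser_add_def ser_neg_def ser_diff_def)
  ultimately show ?thesis by simp
qed

lemma cps_fin_supp: "cps f \<Longrightarrow> f m \<noteq> 0 \<Longrightarrow> fin_supp m"
  unfolding cps_def by blast

lemma cps_infinite_supp: "cps f \<Longrightarrow> \<not> fin_supp m \<Longrightarrow> f m = 0"
  unfolding cps_def by blast

lemma deg_le_splits: "(a,b) \<in> splits m \<Longrightarrow> fin_supp m \<Longrightarrow> deg a \<le> deg m \<and> deg b \<le> deg m"
  using deg_splits by fastforce

lemma cps_finite_deg_le: "cps f \<Longrightarrow> finite {a. f a \<noteq> 0 \<and> deg a \<le> d}"
proof -
  assume "cps f"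
  moreover have "{a. f a \<noteq> 0 \<and> deg a \<le> d} = (\<Union>k\<in>{..d}. {a. f a \<noteq> 0 \<and> deg a = k})" by auto
  ultimately show ?thesis unfolding cps_def by simp
qed

lemma cps_mul: "cps f \<Longrightarrow> cps g \<Longrightarrow> cps (ser_mul f g)"
proof -
  assume f: "cps f" and g: "cps g"
  have A: "ser_mul f g m \<noteq> 0 \<Longrightarrow> fin_supp m" for m using ser_mul_infinite_supp by blast
  have "finite {m. ser_mul f g m \<noteq> 0 \<and> deg m = d}" for d
  proof -
    let ?Fa = "{a. f a \<noteq> 0 \<and> deg a \<le> d}" and ?Gb = "{b. g b \<noteq> 0 \<and> deg b \<le> d}"
    have fF: "finite ?Fa" and fG: "finite ?Gb" using f g by (simp_all add: cps_finite_deg_le)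
    have "{m. ser_mul f g m \<noteq> 0 \<and> deg m = d} \<subseteq> (\<lambda>(a,b) l. a l + b l) ` (?Fa \<times> ?Gb)"
    proof
      fix m assume "m \<in> {m. ser_mul f g m \<noteq> 0 \<and> deg m = d}"
      hence nz: "ser_mul f g m \<noteq> 0" and dm: "deg m = d" by auto
      have fm: "fin_supp m" using A nz by blast
      obtain p where p: "p \<in> splits m" "(case p of (m1,m2) \<Rightarrow> f m1 * g m2) \<noteq> 0"
        using nz unfolding ser_mul_splits by (meson sum.neutral)
      obtain a b where ab: "p = (a,b)" by (cases p)
      have "f a \<noteq> 0" "g b \<noteq> 0" using p ab by auto
      moreover have "deg a \<le> d" "deg b \<le> d" using deg_le_splits[of a b m] p ab fm dm by auto
      moreover have "m = (\<lambda>l. a l + b l)" using p ab by (auto simp: splits_def)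
      ultimately show "m \<in> (\<lambda>(a,b) l. a l + b l) ` (?Fa \<times> ?Gb)" by force
    qed
    thus ?thesis using fF fG by (meson finite_SigmaI finite_imageI finite_subset)
  qed
  thus ?thesis using A unfolding cps_def by blast
qed

lemma sum_splits_assoc:
  assumes fm: "fin_supp m"
  shows "(\<Sum>p\<in>splits m. \<Sum>q\<in>splits (fst p). F (fst q) (snd q) (snd p))
       = (\<Sum>p\<in>splits m. \<Sum>q\<in>splits (snd p). F (fst p) (fst q) (snd q))"
proof -
  have fL: "\<forall>p\<in>splits m. finite (splits (fst p))" using splits_fin_supp fm finite_splits by (metis prod.collapse)
  have fR: "\<forall>p\<in>splits m. finite (splits (snd p))" using splits_fin_supp fm finite_splits by (metis prod.collapse)
  have L: "(\<Sum>p\<in>splits m. \<Sum>q\<in>splits (fst p). F (fst q) (snd q) (snd p))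
       = (\<Sum>z\<in>Sigma (splits m) (\<lambda>p. splits (fst p)). F (fst (snd z)) (snd (snd z)) (snd (fst z)))"
    using sum.Sigma[OF finite_splits[OF fm] fL, of "\<lambda>p q. F (fst q) (snd q) (snd p)"] by (simp add: split_def)
  have R: "(\<Sum>p\<in>splits m. \<Sum>q\<in>splits (snd p). F (fst p) (fst q) (snd q))
       = (\<Sum>z\<in>Sigma (splits m) (\<lambda>p. splits (snd p)). F (fst (fst z)) (fst (snd z)) (snd (snd z)))"
    using sum.Sigma[OF finite_splits[OF fm] fR, of "\<lambda>p q. F (fst p) (fst q) (snd q)"] by (simp add: split_def)
  have "(\<Sum>z\<in>Sigma (splits m) (\<lambda>p. splits (fst p)). F (fst (snd z)) (snd (snd z)) (snd (fst z)))
      = (\<Sum>z\<in>Sigma (splits m) (\<lambda>p. splits (snd p)). F (fst (fst z)) (fst (snd z)) (snd (snd z)))"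
  proof (rule sum.reindex_bij_witness[where
        j = "\<lambda>((x,c),(a,b)). ((a, \<lambda>l. b l + c l), (b, c))"
        and i = "\<lambda>((a,y),(b,c)). ((\<lambda>l. a l + b l, c), (a, b))"])
    fix z assume "z \<in> Sigma (splits m) (\<lambda>p. splits (fst p))"
    then obtain x c a b where z: "z = ((x,c),(a,b))" and h1: "\<forall>l. x l + c l = m l" and h2: "\<forall>l. a l + b l = x l"
      by (auto simp: splits_def)
    have xe: "x = (\<lambda>l. a l + b l)" using h2 by auto
    show "(\<lambda>((a,y),(b,c)). ((\<lambda>l. a l + b l, c), (a, b))) ((\<lambda>((x,c),(a,b)). ((a, \<lambda>l. b l + c l), (b, c))) z) = z"
      using z xe by simp
    show "(\<lambda>((x,c),(a,b)). ((a, \<lambda>l. b l + c l), (b, c))) z \<in> Sigma (splits m) (\<lambda>p. splits (snd p))"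
      using z h1 h2 by (auto simp: splits_def add.assoc[symmetric])
    show "F (fst (fst ((\<lambda>((x,c),(a,b)). ((a, \<lambda>l. b l + c l), (b, c))) z)))
            (fst (snd ((\<lambda>((x,c),(a,b)). ((a, \<lambda>l. b l + c l), (b, c))) z)))
            (snd (snd ((\<lambda>((x,c),(a,b)). ((a, \<lambda>l. b l + c l), (b, c))) z)))
          = F (fst (snd z)) (snd (snd z)) (snd (fst z))" using z by simp
  next
    fix z assume "z \<in> Sigma (splits m) (\<lambda>p. splits (snd p))"
    then obtain a y b c where z: "z = ((a,y),(b,c))" and h1: "\<forall>l. a l + y l = m l" and h2: "\<forall>l. b l + c l = y l"
      by (auto simp: splits_def)
    have ye: "y = (\<lambda>l. b l + c l)" using h2 by auto
    show "(\<lambda>((x,c),(a,b)). ((a, \<lambda>l. b l + c l), (b, c))) ((\<lambda>((a,y),(b,c)). ((\<lambda>l. a l + b l, c), (a, b))) z) = z"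
      using z ye by simp
    show "(\<lambda>((a,y),(b,c)). ((\<lambda>l. a l + b l, c), (a, b))) z \<in> Sigma (splits m) (\<lambda>p. splits (fst p))"
      using z h1 h2 by (auto simp: splits_def add.assoc)
  qed
  thus ?thesis using L R by simp
qed

lemma ser_mul_assoc: "ser_mul (ser_mul f g) h = ser_mul f (ser_mul g (h::'a::comm_ring_1 ser))"
proof
  fix m
  show "ser_mul (ser_mul f g) h m = ser_mul f (ser_mul g h) m"
  proof (cases "fin_supp m")
    case False thus ?thesis by (simp add: ser_mul_infinite_supp)
  next
    case True
    have "ser_mul (ser_mul f g) h m = (\<Sum>p\<in>splits m. \<Sum>q\<in>splits (fst p). f (fst q) * g (snd q) * h (snd p))"
      by (simp add: ser_mul_splits split_def sum_distrib_right)
    also have "\<dots> = (\<Sum>p\<in>splits m. \<Sum>q\<in>splits (snd p). f (fst p) * g (fst q) * h (snd q))"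
      using sum_splits_assoc[OF True, of "\<lambda>a b c. f a * g b * h c"] by simp
    also have "\<dots> = ser_mul f (ser_mul g h) m"
      by (simp add: ser_mul_splits split_def sum_distrib_left mult.assoc)
    finally show ?thesis .
  qed
qed

lemma ser_mul_comm: "ser_mul f g = ser_mul g (f::'a::comm_ring_1 ser)"
proof
  fix m
  show "ser_mul f g m = ser_mul g f m"
    unfolding ser_mul_splits split_def
  proof (rule sum.reindex_bij_witness[where i = "\<lambda>(a,b). (b,a)" and j = "\<lambda>(a,b). (b,a)"])
  qed (auto simp: splits_def add.commute mult.commute)
qed

lemma ser_mul_add: "ser_mul f (ser_add g h) = ser_add (ser_mul f g) (ser_mul f (h::'a::comm_ring_1 ser))"
  by (rule ext) (simp add: ser_mul_def ser_add_def distrib_left sum.distrib case_prod_beta)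

lemma ser_mul_zero: "ser_mul f ser_zero = (ser_zero::'a::comm_ring_1 ser)"
  by (rule ext) (simp add: ser_mul_def ser_zero_def)

definition ser_monom :: "mono \<Rightarrow> 'a::comm_ring_1 ser" where
  "ser_monom e = (\<lambda>m. if m = e then 1 else 0)"

lemma cps_monom: assumes "fin_supp e" shows "cps (ser_monom e)"
proof -
  have "{m. ser_monom e m \<noteq> (0::'a) \<and> deg m = d} \<subseteq> {e}" for d by (auto simp: ser_monom_def)
  hence "finite {m. ser_monom e m \<noteq> (0::'a) \<and> deg m = d}" for d by (meson finite.emptyI finite_insert finite_subset)
  thus ?thesis using assms by (auto simp: cps_def ser_monom_def)
qed

lemma ser_xmono_infinite_supp:
  assumes "fin_supp e" "cps g" "\<not> fin_supp m" shows "ser_xmono e g m = 0"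
proof (cases "\<forall>l. e l \<le> m l")
  case True
  have "m = (\<lambda>l. e l + (m l - e l))" using True by auto
  hence "\<not> fin_supp (\<lambda>l. m l - e l)" using assms(1,3) msupp_add by (metis finite_Un)
  thus ?thesis using True assms(2) by (simp add: ser_xmono_def cps_infinite_supp)
qed (unfold ser_xmono_def, meson)

lemma ser_xmono_eq_mul_monom:
  assumes "fin_supp e" "cps g" shows "ser_xmono e g = ser_mul (ser_monom e) (g::'a::comm_ring_1 ser)"
proof
  fix m
  show "ser_xmono e g m = ser_mul (ser_monom e) g m"
  proof (cases "fin_supp m")
    case False
    thus ?thesis using assms by (simp add: ser_xmono_infinite_supp ser_mul_infinite_supp)
  next
    case True
    have "{p \<in> splits m. fst p = e} = (if \<forall>l. e l \<le> m l then {(e, \<lambda>l. m l - e l)} else {})"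
      by (auto simp: splits_iff)
    moreover have "ser_mul (ser_monom e) g m = (\<Sum>p\<in>{p \<in> splits m. fst p = e}. g (snd p))"
      using finite_splits[OF True] by (simp add: ser_mul_splits ser_monom_def split_def sum.inter_filter if_distrib[of "(*)"] if_distribR cong: if_cong)
    ultimately show ?thesis by (simp add: ser_xmono_def)
  qed
qed

lemma ser_monom_zero: "ser_monom (\<lambda>l. 0) = ser_one"
  by (simp add: ser_monom_def ser_one_def)

lemma ser_one_mul: assumes "cps g" shows "ser_mul ser_one g = (g::'a::comm_ring_1 ser)"
proof -
  have "ser_mul ser_one g = ser_xmono (\<lambda>l. 0) g"
    using assms by (simp add: ser_xmono_eq_mul_monom ser_monom_zero msupp_def)
  thus ?thesis by (simp add: ser_xmono_def)
qed

lemma ser_mul_monom: "ser_mul (ser_monom a) (ser_monom b) = (ser_monom (\<lambda>l. a l + b l) :: 'a::comm_ring_1 ser)" if "fin_supp a" "fin_supp b"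
proof -
  have "ser_mul (ser_monom a) (ser_monom b) = ser_xmono a (ser_monom b :: 'a ser)" using ser_xmono_eq_mul_monom that cps_monom by metis
  also have "\<dots> = ser_monom (\<lambda>l. a l + b l)"
  proof
    fix m show "ser_xmono a (ser_monom b) m = (ser_monom (\<lambda>l. a l + b l) m :: 'a)"
    proof (cases "\<forall>l. a l \<le> m l")
      case True
      have "((\<lambda>l. m l - a l) = b) = (m = (\<lambda>l. a l + b l))"
        using True by (auto simp: fun_eq_iff) (metis add_diff_cancel_left' le_add_diff_inverse)+
      thus ?thesis using True by (simp add: ser_xmono_def ser_monom_def)
    next
      case False
      hence "m \<noteq> (\<lambda>l. a l + b l)" by auto
      thus ?thesis using False by (simp add: ser_xmono_def ser_monom_def)
    qed
  qed
  finally show ?thesis .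
qed

lemma ser_xmono_inj: "ser_xmono e f = ser_xmono e g \<Longrightarrow> f = g"
proof
  fix m assume h: "ser_xmono e f = ser_xmono e g"
  have "ser_xmono e f (\<lambda>l. e l + m l) = ser_xmono e g (\<lambda>l. e l + m l)" using h by simp
  thus "f m = g m" by (simp add: ser_xmono_def)
qed

typedef (overloaded) 'a cser = "{f :: 'a::comm_ring_1 ser. cps f}"
  morphisms Rep_cser Abs_cser
  using cps_zero by blast

setup_lifting type_definition_cser

instantiation cser :: (comm_ring_1) comm_ring_1
begin
lift_definition zero_cser :: "'a cser" is ser_zero by (rule cps_zero)
lift_definition one_cser :: "'a cser" is ser_one by (rule cps_one)
lift_definition plus_cser :: "'a cser \<Rightarrow> 'a cser \<Rightarrow> 'a cser" is ser_add by (rule cps_add)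
lift_definition uminus_cser :: "'a cser \<Rightarrow> 'a cser" is ser_neg by (rule cps_neg)
lift_definition minus_cser :: "'a cser \<Rightarrow> 'a cser \<Rightarrow> 'a cser" is ser_diff by (rule cps_diff)
lift_definition times_cser :: "'a cser \<Rightarrow> 'a cser \<Rightarrow> 'a cser" is ser_mul by (rule cps_mul)
instance
proof
  fix a b c :: "'a cser"
  show "a * b * c = a * (b * c)" by transfer (rule ser_mul_assoc)
  show "a * b = b * a" by transfer (rule ser_mul_comm)
  show "1 * a = a" by transfer (rule ser_one_mul)
  show "(a + b) * c = a * c + b * c" by transfer (metis ser_mul_add ser_mul_comm)
  show "a + b + c = a + (b + c)" by transfer (simp add: ser_add_def add.assoc)
  show "a + b = b + a" by transfer (simp add: ser_add_def add.commute)
  show "0 + a = a" by transfer (simp add: ser_add_def ser_zero_def)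
  show "- a + a = 0" by transfer (simp add: ser_add_def ser_zero_def ser_neg_def)
  show "a - b = a + - b" by transfer (simp add: ser_add_def ser_diff_def ser_neg_def)
  show "(0::'a cser) \<noteq> 1"
  proof transfer
    show "(ser_zero::'a ser) \<noteq> ser_one"
    proof
      assume "(ser_zero::'a ser) = ser_one"
      hence "ser_zero (\<lambda>l. 0) = (ser_one (\<lambda>l. 0)::'a)" by simp
      thus False by (simp add: ser_zero_def ser_one_def)
    qed
  qed
qed
end

lift_definition xmon :: "mono \<Rightarrow> 'a::comm_ring_1 cser" is "\<lambda>e. if fin_supp e then ser_monom e else ser_zero"
  by (simp add: cps_monom cps_zero)

lemma xmon_add: "fin_supp a \<Longrightarrow> fin_supp b \<Longrightarrow> xmon (\<lambda>l. a l + b l) = xmon a * xmon b"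
  by transfer (simp add: ser_mul_monom msupp_add)

lemma xmon_zero: "xmon (\<lambda>l. 0) = 1"
  by transfer (simp add: ser_monom_zero msupp_def)

lemma Rep_xmon_mult: "fin_supp e \<Longrightarrow> Rep_cser (xmon e * f) = ser_xmono e (Rep_cser f)"
  by transfer (simp add: ser_xmono_eq_mul_monom)

lemma xmon_cancel: "fin_supp e \<Longrightarrow> xmon e * f = xmon e * g \<Longrightarrow> f = g"
  by (metis Rep_xmon_mult Rep_cser_inject ser_xmono_inj)

lemma Abs_ser_xmono: "fin_supp e \<Longrightarrow> cps f \<Longrightarrow> Abs_cser (ser_xmono e f) = xmon e * Abs_cser f"
  by (metis Abs_cser_inverse Rep_cser_inverse Rep_xmon_mult mem_Collect_eq)

lemma Abs_cser_add: "cps f \<Longrightarrow> cps g \<Longrightarrow> Abs_cser (ser_add f g) = Abs_cser f + Abs_cser g"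
  by (metis Abs_cser_inverse mem_Collect_eq plus_cser.abs_eq eq_onp_same_args)
lemma Abs_cser_mul: "cps f \<Longrightarrow> cps g \<Longrightarrow> Abs_cser (ser_mul f g) = Abs_cser f * Abs_cser g"
  by (metis times_cser.abs_eq eq_onp_same_args)
lemma Abs_cser_neg: "cps f \<Longrightarrow> Abs_cser (ser_neg f) = - Abs_cser f"
  by (metis uminus_cser.abs_eq eq_onp_same_args)
lemma Abs_cser_one: "Abs_cser ser_one = 1"
  by (metis one_cser.abs_eq)
lemma Abs_cser_zero: "Abs_cser ser_zero = 0"
  by (metis zero_cser.abs_eq)

lemma msupp_comp: "bij w \<Longrightarrow> msupp (m \<circ> w) = inv w ` msupp m"
proof -
  assume w: "bij w"
  show ?thesis
  proof (rule set_eqI)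
    fix x
    have "x \<in> msupp (m \<circ> w) \<longleftrightarrow> m (w x) \<noteq> 0" by (simp add: msupp_def)
    moreover have "x \<in> inv w ` msupp m \<longleftrightarrow> w x \<in> msupp m"
    proof
      assume "x \<in> inv w ` msupp m"
      then obtain y where "y \<in> msupp m" "x = inv w y" by blast
      thus "w x \<in> msupp m" using w by (simp add: bij_inv_eq_iff)
    next
      assume "w x \<in> msupp m"
      moreover have "x = inv w (w x)" using w by (simp add: bij_is_inj)
      ultimately show "x \<in> inv w ` msupp m" by blast
    qed
    ultimately show "x \<in> msupp (m \<circ> w) \<longleftrightarrow> x \<in> inv w ` msupp m" by (simp add: msupp_def)
  qed
qed

lemma bij_comp_inv: "bij w \<Longrightarrow> w \<circ> inv w = id" "bij w \<Longrightarrow> inv w \<circ> w = id"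
  using bij_is_surj surj_iff bij_is_inj inj_iff by metis+

lemma fin_supp_comp: "bij w \<Longrightarrow> fin_supp (m \<circ> w) = fin_supp m"
proof -
  assume w: "bij w"
  have "inj (inv w)" using w bij_imp_bij_inv bij_is_inj by blast
  hence "inj_on (inv w) (msupp m)" by (meson inj_on_subset subset_UNIV)
  thus ?thesis using w by (simp add: msupp_comp finite_image_iff)
qed

lemma deg_comp: assumes w: "bij w" shows "deg (m \<circ> w) = deg m"
proof -
  have i: "inj_on (inv w) (msupp m)" using w by (meson bij_imp_bij_inv bij_is_inj inj_on_subset subset_UNIV)
  have "deg (m \<circ> w) = sum (m \<circ> w) (inv w ` msupp m)" by (simp add: deg_def msupp_comp w)
  also have "\<dots> = sum (m \<circ> w \<circ> inv w) (msupp m)" by (simp add: sum.reindex[OF i])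
  also have "m \<circ> w \<circ> inv w = m" using bij_comp_inv(1)[OF w] by (simp add: comp_assoc)
  finally show ?thesis unfolding deg_def .
qed

lemma comp_inv_cancel: assumes "bij w" shows "m \<circ> w \<circ> inv w = m" "m \<circ> inv w \<circ> w = m"
  using bij_comp_inv[OF assms] by (simp_all add: comp_assoc)

lemma cps_act: assumes w: "bij w" and f: "cps f" shows "cps (ser_act w f)"
proof -
  have "{m. ser_act w f m \<noteq> 0 \<and> deg m = d} \<subseteq> (\<lambda>m. m \<circ> inv w) ` {m. f m \<noteq> 0 \<and> deg m = d}" for d
  proof
    fix m assume "m \<in> {m. ser_act w f m \<noteq> 0 \<and> deg m = d}"
    hence "f (m \<circ> w) \<noteq> 0" "deg (m \<circ> w) = d" by (auto simp: ser_act_def deg_comp w)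
    moreover have "m = (m \<circ> w) \<circ> inv w" using comp_inv_cancel w by metis
    ultimately show "m \<in> (\<lambda>m. m \<circ> inv w) ` {m. f m \<noteq> 0 \<and> deg m = d}" by blast
  qed
  hence "finite {m. ser_act w f m \<noteq> 0 \<and> deg m = d}" for d using f unfolding cps_def by (meson finite_imageI finite_subset)
  moreover have "ser_act w f m \<noteq> 0 \<Longrightarrow> fin_supp m" for m using f fin_supp_comp[OF w] unfolding cps_def ser_act_def by metis
  ultimately show ?thesis unfolding cps_def by blast
qed

lemma act_add: "ser_act w (ser_add f g) = ser_add (ser_act w f) (ser_act w g)"
  by (simp add: ser_act_def ser_add_def)
lemma act_neg: "ser_act w (ser_neg f) = ser_neg (ser_act w f)"
  by (simp add: ser_act_def ser_neg_def)
lemma act_zero: "ser_act w ser_zero = ser_zero"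
  by (simp add: ser_act_def ser_zero_def)
lemma act_one: "bij w \<Longrightarrow> ser_act w ser_one = (ser_one :: 'a::comm_ring_1 ser)"
proof
  fix m :: mono assume w: "bij w"
  have "(m \<circ> w = (\<lambda>l. 0)) = (m = (\<lambda>l. 0))"
    by (metis comp_inv_cancel(1) w comp_apply)
  thus "ser_act w ser_one m = (ser_one m :: 'a)" by (simp add: ser_act_def ser_one_def)
qed
lemma act_monom: "bij w \<Longrightarrow> ser_act w (ser_monom e) = ser_monom (e \<circ> inv w)"
proof
  fix m :: mono assume w: "bij w"
  have "(m \<circ> w = e) = (m = e \<circ> inv w)" by (metis comp_inv_cancel w)
  thus "ser_act w (ser_monom e) m = ser_monom (e \<circ> inv w) m" by (simp add: ser_act_def ser_monom_def)
qed

lemma act_mul: assumes w: "bij w" shows "ser_act w (ser_mul f g) = ser_mul (ser_act w f) (ser_act w g)"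
proof
  fix m
  show "ser_act w (ser_mul f g) m = ser_mul (ser_act w f) (ser_act w g) m"
    unfolding ser_act_def ser_mul_splits split_def
  proof (rule sym, rule sum.reindex_bij_witness[where j = "\<lambda>(a,b). (a \<circ> w, b \<circ> w)" and i = "\<lambda>(a,b). (a \<circ> inv w, b \<circ> inv w)"])
    fix p assume p: "p \<in> splits m"
    show "(\<lambda>(a,b). (a \<circ> inv w, b \<circ> inv w)) ((\<lambda>(a,b). (a \<circ> w, b \<circ> w)) p) = p"
      using w by (simp add: case_prod_beta comp_assoc bij_comp_inv)
    have h: "\<forall>l. fst p l + snd p l = m l" using p by (simp add: splits_def case_prod_beta del: split_paired_All)
    show "(\<lambda>(a,b). (a \<circ> w, b \<circ> w)) p \<in> splits (m \<circ> w)" using h by (simp add: splits_def case_prod_beta del: split_paired_All)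
    show "f (fst ((\<lambda>(a,b). (a \<circ> w, b \<circ> w)) p)) * g (snd ((\<lambda>(a,b). (a \<circ> w, b \<circ> w)) p)) = f (fst p \<circ> w) * g (snd p \<circ> w)"
      by (simp add: case_prod_beta)
  next
    fix p assume p: "p \<in> splits (m \<circ> w)"
    show "(\<lambda>(a,b). (a \<circ> w, b \<circ> w)) ((\<lambda>(a,b). (a \<circ> inv w, b \<circ> inv w)) p) = p"
      using w by (simp add: case_prod_beta comp_assoc bij_comp_inv)
    have "\<forall>l. fst p l + snd p l = m (w l)" using p by (auto simp: splits_def case_prod_beta)
    hence "\<forall>l. fst p (inv w l) + snd p (inv w l) = m l" using w by (metis bij_inv_eq_iff)
    thus "(\<lambda>(a,b). (a \<circ> inv w, b \<circ> inv w)) p \<in> splits m" by (auto simp: splits_def case_prod_beta)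
  qed
qed

lemma gen_ideal_add: "h1 \<in> gen_ideal G \<Longrightarrow> h2 \<in> gen_ideal G \<Longrightarrow> ser_add h1 h2 \<in> gen_ideal G"
proof (induction h1 rule: gen_ideal.induct)
  case gen_zero
  have "ser_add ser_zero h2 = h2" by (simp add: ser_add_def ser_zero_def)
  thus ?case using gen_zero by simp
next
  case (gen_step g c h)
  have "ser_add (ser_add (ser_mul c g) h) h2 = ser_add (ser_mul c g) (ser_add h h2)"
    by (simp add: ser_add_def add.assoc)
  thus ?case using gen_step gen_ideal.gen_step by metis
qed

lemma gen_ideal_mul: "h \<in> gen_ideal G \<Longrightarrow> cps c \<Longrightarrow> ser_mul c h \<in> gen_ideal G"
proof (induction h rule: gen_ideal.induct)
  case gen_zero thus ?case by (simp add: ser_mul_zero gen_ideal.gen_zero)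
next
  case (gen_step g c1 h)
  have "ser_mul c (ser_add (ser_mul c1 g) h) = ser_add (ser_mul (ser_mul c c1) g) (ser_mul c h)"
    by (simp add: ser_mul_add ser_mul_assoc)
  moreover have "cps (ser_mul c c1)" using gen_step cps_mul by blast
  ultimately show ?case using gen_step gen_ideal.gen_step by metis
qed

lemma closed_zero: "ser_zero \<in> closed_ideal G"
  unfolding closed_ideal_def using cps_zero gen_ideal.gen_zero by blast

lemma closed_add: "f \<in> closed_ideal G \<Longrightarrow> g \<in> closed_ideal G \<Longrightarrow> ser_add f g \<in> closed_ideal G"
proof -
  assume f: "f \<in> closed_ideal G" and g: "g \<in> closed_ideal G"
  have "cps (ser_add f g)" using f g cps_add unfolding closed_ideal_def by blast
  moreover have "\<exists>j \<in> gen_ideal G. \<forall>m. deg m < n \<longrightarrow> ser_add f g m = j m" for n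
  proof -
    obtain j1 where j1: "j1 \<in> gen_ideal G" "\<forall>m. deg m < n \<longrightarrow> f m = j1 m" using f unfolding closed_ideal_def by blast
    obtain j2 where j2: "j2 \<in> gen_ideal G" "\<forall>m. deg m < n \<longrightarrow> g m = j2 m" using g unfolding closed_ideal_def by blast
    show ?thesis using j1 j2 gen_ideal_add[of j1 G j2] by (intro bexI[of _ "ser_add j1 j2"]) (auto simp: ser_add_def)
  qed
  ultimately show ?thesis unfolding closed_ideal_def by blast
qed

lemma ser_mul_cong_low_deg:
  assumes c: "cps c" and fg: "\<forall>m. deg m < n \<longrightarrow> f m = g m" and dm: "deg m < n"
  shows "ser_mul c f m = ser_mul c g m"
  unfolding ser_mul_splits
proof (rule sum.cong[OF refl], clarify)
  fix a b assume p: "(a, b) \<in> splits m"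
  have "deg b < n" if "c a \<noteq> 0"
  proof (cases "fin_supp b")
    case True
    have "m = (\<lambda>l. a l + b l)" using p by (auto simp: splits_def)
    hence "fin_supp m" using True cps_fin_supp[OF c that] msupp_add by (metis finite_Un)
    thus ?thesis using deg_le_splits[OF p] dm by simp
  next
    case False
    thus ?thesis using dm deg_infinite_supp by simp
  qed
  thus "c a * f b = c a * g b" using fg by (cases "c a = 0") auto
qed

lemma closed_mul: "cps c \<Longrightarrow> f \<in> closed_ideal G \<Longrightarrow> ser_mul c f \<in> closed_ideal G"
proof -
  assume c: "cps c" and f: "f \<in> closed_ideal G"
  have "cps (ser_mul c f)" using c f cps_mul unfolding closed_ideal_def by blast
  moreover have "\<exists>j \<in> gen_ideal G. \<forall>m. deg m < n \<longrightarrow> ser_mul c f m = j m" for n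
  proof -
    obtain j where j: "j \<in> gen_ideal G" "\<forall>m. deg m < n \<longrightarrow> f m = j m"
      using f unfolding closed_ideal_def by blast
    thus ?thesis using gen_ideal_mul[OF j(1) c] ser_mul_cong_low_deg[OF c j(2)] by blast
  qed
  ultimately show ?thesis unfolding closed_ideal_def by blast
qed

section \<open>Localization at the roots\<close>

lemma finite_roots: "finite roots"
  unfolding roots_def Wgrp_def by simp

definition root_part :: "mono \<Rightarrow> mono" where
  "root_part e = (\<lambda>l. if l \<in> roots then e l else 0)"

lemma fin_supp_root_part: "fin_supp (root_part e)"
proof -
  have "msupp (root_part e) \<subseteq> roots" by (auto simp: msupp_def root_part_def)
  thus ?thesis using finite_roots finite_subset by blast
qed

lemma root_part_add: "root_part (\<lambda>l. a l + b l) = (\<lambda>l. root_part a l + root_part b l)"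
  by (auto simp: root_part_def)

lemma root_part_id: "msupp e \<subseteq> roots \<Longrightarrow> root_part e = e"
  by (auto simp: root_part_def msupp_def fun_eq_iff)

lemma fin_supp_roots: "msupp e \<subseteq> roots \<Longrightarrow> fin_supp e"
  using finite_roots finite_subset by blast

lemma xmon_root_part_add: "xmon (root_part (\<lambda>l. a l + b l)) = xmon (root_part a) * xmon (root_part b)"
  by (simp add: root_part_add xmon_add fin_supp_root_part)

text \<open>A pair (f, e) stands for f / x^e. Exponents are cut down to the roots, so only monomials in
  the x_gamma are inverted.\<close>
definition loc_rel :: "'a::comm_ring_1 cser \<times> mono \<Rightarrow> 'a cser \<times> mono \<Rightarrow> bool" where
  "loc_rel p q \<longleftrightarrow> xmon (root_part (snd q)) * fst p = xmon (root_part (snd p)) * fst q"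

lemma loc_rel_equivp: "equivp (loc_rel :: 'a::comm_ring_1 cser \<times> mono \<Rightarrow> _ \<Rightarrow> bool)"
proof (rule equivpI)
  show "reflp (loc_rel :: 'a cser \<times> mono \<Rightarrow> _)" by (auto intro: reflpI simp: loc_rel_def mult.commute)
  show "symp (loc_rel :: 'a cser \<times> mono \<Rightarrow> _)" by (auto intro: sympI simp: loc_rel_def)
  show "transp (loc_rel :: 'a cser \<times> mono \<Rightarrow> _)"
  proof (rule transpI)
    fix p q r :: "'a cser \<times> mono"
    assume "loc_rel p q" "loc_rel q r"
    hence h1: "xmon (root_part (snd q)) * fst p = xmon (root_part (snd p)) * fst q"
      and h2: "xmon (root_part (snd r)) * fst q = xmon (root_part (snd q)) * fst r" by (auto simp: loc_rel_def)
    have "xmon (root_part (snd q)) * (xmon (root_part (snd r)) * fst p) = xmon (root_part (snd q)) * (xmon (root_part (snd p)) * fst r)"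
    proof -
      have "xmon (root_part (snd q)) * (xmon (root_part (snd r)) * fst p) = xmon (root_part (snd r)) * (xmon (root_part (snd q)) * fst p)"
        by (simp add: algebra_simps)
      also have "\<dots> = xmon (root_part (snd p)) * (xmon (root_part (snd r)) * fst q)" using h1 by (simp add: algebra_simps)
      also have "\<dots> = xmon (root_part (snd q)) * (xmon (root_part (snd p)) * fst r)" using h2 by (simp add: algebra_simps)
      finally show ?thesis .
    qed
    \<comment> \<open>monomials are not zero divisors\<close>
    hence "xmon (root_part (snd r)) * fst p = xmon (root_part (snd p)) * fst r" using xmon_cancel fin_supp_root_part by blast
    thus "loc_rel p r" by (simp add: loc_rel_def)
  qed
qed

quotient_type (overloaded) 'a loc = "'a::comm_ring_1 cser \<times> mono" / loc_rel
  by (rule loc_rel_equivp)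

definition madd :: "mono \<Rightarrow> mono \<Rightarrow> mono" where "madd a b = (\<lambda>l. a l + b l)"
definition mzero :: mono where "mzero = (\<lambda>l. 0)"

lemma xmon_root_part_madd: "xmon (root_part (madd a b)) = xmon (root_part a) * xmon (root_part b)"
  by (simp add: madd_def xmon_root_part_add)
lemma xmon_root_part_mzero: "xmon (root_part mzero) = 1"
proof -
  have "root_part mzero = (\<lambda>l. 0)" by (simp add: root_part_def mzero_def)
  thus ?thesis by (simp add: xmon_zero)
qed

lemma loc_rel_plus:
  fixes f1 f2 g1 g2 :: "'a::comm_ring_1 cser"
  assumes h1: "xmon (root_part a2) * f1 = xmon (root_part a1) * f2" and h2: "xmon (root_part b2) * g1 = xmon (root_part b1) * g2"
  shows "xmon (root_part (madd a2 b2)) * (xmon (root_part b1) * f1 + xmon (root_part a1) * g1)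
       = xmon (root_part (madd a1 b1)) * (xmon (root_part b2) * f2 + xmon (root_part a2) * g2)"
proof -
  have "xmon (root_part (madd a2 b2)) * (xmon (root_part b1) * f1 + xmon (root_part a1) * g1)
      = xmon (root_part b2) * xmon (root_part b1) * (xmon (root_part a2) * f1) + xmon (root_part a2) * xmon (root_part a1) * (xmon (root_part b2) * g1)"
    by (simp add: xmon_root_part_madd algebra_simps)
  also have "\<dots> = xmon (root_part b2) * xmon (root_part b1) * (xmon (root_part a1) * f2) + xmon (root_part a2) * xmon (root_part a1) * (xmon (root_part b1) * g2)"
    by (simp only: h1 h2)
  also have "\<dots> = xmon (root_part (madd a1 b1)) * (xmon (root_part b2) * f2 + xmon (root_part a2) * g2)"
    by (simp add: xmon_root_part_madd algebra_simps)
  finally show ?thesis .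
qed

lemma loc_rel_minus:
  fixes f1 f2 g1 g2 :: "'a::comm_ring_1 cser"
  assumes h1: "xmon (root_part a2) * f1 = xmon (root_part a1) * f2" and h2: "xmon (root_part b2) * g1 = xmon (root_part b1) * g2"
  shows "xmon (root_part (madd a2 b2)) * (xmon (root_part b1) * f1 - xmon (root_part a1) * g1)
       = xmon (root_part (madd a1 b1)) * (xmon (root_part b2) * f2 - xmon (root_part a2) * g2)"
proof -
  have "xmon (root_part (madd a2 b2)) * (xmon (root_part b1) * f1 - xmon (root_part a1) * g1)
      = xmon (root_part b2) * xmon (root_part b1) * (xmon (root_part a2) * f1) - xmon (root_part a2) * xmon (root_part a1) * (xmon (root_part b2) * g1)"
    by (simp add: xmon_root_part_madd algebra_simps)
  also have "\<dots> = xmon (root_part b2) * xmon (root_part b1) * (xmon (root_part a1) * f2) - xmon (root_part a2) * xmon (root_part a1) * (xmon (root_part b1) * g2)"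
    by (simp only: h1 h2)
  also have "\<dots> = xmon (root_part (madd a1 b1)) * (xmon (root_part b2) * f2 - xmon (root_part a2) * g2)"
    by (simp add: xmon_root_part_madd algebra_simps)
  finally show ?thesis .
qed

lemma loc_rel_times:
  fixes f1 f2 g1 g2 :: "'a::comm_ring_1 cser"
  assumes h1: "xmon (root_part a2) * f1 = xmon (root_part a1) * f2" and h2: "xmon (root_part b2) * g1 = xmon (root_part b1) * g2"
  shows "xmon (root_part (madd a2 b2)) * (f1 * g1) = xmon (root_part (madd a1 b1)) * (f2 * g2)"
proof -
  have "xmon (root_part (madd a2 b2)) * (f1 * g1) = (xmon (root_part a2) * f1) * (xmon (root_part b2) * g1)"
    by (simp add: xmon_root_part_madd algebra_simps)
  also have "\<dots> = (xmon (root_part a1) * f2) * (xmon (root_part b1) * g2)" by (simp only: h1 h2)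
  also have "\<dots> = xmon (root_part (madd a1 b1)) * (f2 * g2)" by (simp add: xmon_root_part_madd algebra_simps)
  finally show ?thesis .
qed

instantiation loc :: (comm_ring_1) comm_ring_1
begin
lift_definition zero_loc :: "'a loc" is "(0, mzero)" .
lift_definition one_loc :: "'a loc" is "(1, mzero)" .
lift_definition plus_loc :: "'a loc \<Rightarrow> 'a loc \<Rightarrow> 'a loc" is
  "\<lambda>p q. (xmon (root_part (snd q)) * fst p + xmon (root_part (snd p)) * fst q, madd (snd p) (snd q))"
  unfolding loc_rel_def using loc_rel_plus by auto
lift_definition uminus_loc :: "'a loc \<Rightarrow> 'a loc" is "\<lambda>p. (- fst p, snd p)"
  by (auto simp: loc_rel_def)
lift_definition minus_loc :: "'a loc \<Rightarrow> 'a loc \<Rightarrow> 'a loc" is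
  "\<lambda>p q. (xmon (root_part (snd q)) * fst p - xmon (root_part (snd p)) * fst q, madd (snd p) (snd q))"
  unfolding loc_rel_def using loc_rel_minus by auto
lift_definition times_loc :: "'a loc \<Rightarrow> 'a loc \<Rightarrow> 'a loc" is
  "\<lambda>p q. (fst p * fst q, madd (snd p) (snd q))"
  unfolding loc_rel_def using loc_rel_times by auto
instance
proof
  fix a b c :: "'a loc"
  show "a * b * c = a * (b * c)" by transfer (simp add: loc_rel_def xmon_root_part_madd algebra_simps)
  show "a * b = b * a" by transfer (simp add: loc_rel_def xmon_root_part_madd algebra_simps)
  show "1 * a = a" by transfer (simp add: loc_rel_def xmon_root_part_madd xmon_root_part_mzero algebra_simps)
  show "(a + b) * c = a * c + b * c" by transfer (simp add: loc_rel_def xmon_root_part_madd algebra_simps)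
  show "a + b + c = a + (b + c)" by transfer (simp add: loc_rel_def xmon_root_part_madd algebra_simps)
  show "a + b = b + a" by transfer (simp add: loc_rel_def xmon_root_part_madd algebra_simps)
  show "0 + a = a" by transfer (simp add: loc_rel_def xmon_root_part_madd xmon_root_part_mzero algebra_simps)
  show "- a + a = 0" by transfer (simp add: loc_rel_def xmon_root_part_madd xmon_root_part_mzero algebra_simps)
  show "a - b = a + - b" by transfer (simp add: loc_rel_def xmon_root_part_madd algebra_simps)
  show "(0::'a loc) \<noteq> 1" by transfer (simp add: loc_rel_def xmon_root_part_mzero)
qed
end

lemma cps_xmono: "fin_supp e \<Longrightarrow> cps f \<Longrightarrow> cps (ser_xmono e (f::'a::comm_ring_1 ser))"
  by (simp add: ser_xmono_eq_mul_monom cps_mul cps_monom)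

lemma msupp_add_roots: "msupp (\<lambda>l. (a::mono) l + b l) \<subseteq> roots" if "msupp a \<subseteq> roots" "msupp b \<subseteq> roots"
  using that by (simp add: msupp_add)

lemma qrep_ok_qadd: "qrep_ok p \<Longrightarrow> qrep_ok q \<Longrightarrow> qrep_ok (qadd p q)"
proof -
  assume p: "qrep_ok p" and q: "qrep_ok q"
  have "cps (ser_xmono (snd q) (fst p))" using p q unfolding qrep_ok_def by (intro cps_xmono fin_supp_roots) auto
  moreover have "cps (ser_xmono (snd p) (fst q))" using p q unfolding qrep_ok_def by (intro cps_xmono fin_supp_roots) auto
  ultimately show ?thesis using p q unfolding qrep_ok_def qadd_def by (simp add: cps_add msupp_add_roots)
qed
lemma qrep_ok_qmul: "qrep_ok p \<Longrightarrow> qrep_ok q \<Longrightarrow> qrep_ok (qmul p q)"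
  unfolding qrep_ok_def qmul_def by (simp add: cps_mul msupp_add_roots)
lemma qrep_ok_qneg: "qrep_ok p \<Longrightarrow> qrep_ok (qneg p)"
  unfolding qrep_ok_def qneg_def by (auto intro!: cps_neg)
lemma qrep_ok_qsub: "qrep_ok p \<Longrightarrow> qrep_ok q \<Longrightarrow> qrep_ok (qsub p q)"
  unfolding qsub_def using qrep_ok_qadd qrep_ok_qneg by blast
lemma qrep_ok_qzero: "qrep_ok qzero"
  unfolding qrep_ok_def qzero_def using cps_zero by (simp add: msupp_def)
lemma qrep_ok_qone: "qrep_ok qone"
  unfolding qrep_ok_def qone_def using cps_one by (simp add: msupp_def)
lemma qrep_ok_qy: "g \<in> roots \<Longrightarrow> qrep_ok (qy g)"
  unfolding qrep_ok_def qy_def using cps_one by (auto simp: msupp_def)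
lemma qrep_ok_qsum: "\<forall>x\<in>set xs. qrep_ok x \<Longrightarrow> qrep_ok (qsum xs)"
  unfolding qsum_def by (induction xs) (auto simp: qrep_ok_qzero qrep_ok_qadd)

definition root_perm :: "(lat \<Rightarrow> lat) \<Rightarrow> bool" where
  "root_perm w \<longleftrightarrow> bij w \<and> w ` roots = roots"

lemma root_perm_inv_roots: "root_perm w \<Longrightarrow> (inv w l \<in> roots) = (l \<in> roots)"
  unfolding root_perm_def by (metis bij_inv_eq_iff image_iff)

lemma msupp_comp_inv: "bij w \<Longrightarrow> msupp (e \<circ> inv w) = w ` msupp e"
proof -
  assume w: "bij w"
  have "bij (inv w)" using w bij_imp_bij_inv by blast
  moreover have "inv (inv w) = w" using w by (simp add: bij_imp_bij_inv inv_inv_eq)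
  ultimately show ?thesis using msupp_comp by metis
qed

lemma qrep_ok_qact: "root_perm w \<Longrightarrow> qrep_ok p \<Longrightarrow> qrep_ok (qact w p)"
proof -
  assume w: "root_perm w" and p: "qrep_ok p"
  have "cps (ser_act w (fst p))" using w p unfolding root_perm_def qrep_ok_def by (auto intro!: cps_act)
  moreover have "msupp (snd p \<circ> inv w) \<subseteq> roots"
  proof -
    have "msupp (snd p \<circ> inv w) = w ` msupp (snd p)" using w msupp_comp_inv unfolding root_perm_def by blast
    also have "\<dots> \<subseteq> w ` roots" using p unfolding qrep_ok_def by (intro image_mono) auto
    finally show ?thesis using w unfolding root_perm_def by simp
  qed
  ultimately show ?thesis unfolding qrep_ok_def qact_def by simp
qed

definition loc_of :: "'a::comm_ring_1 qrep \<Rightarrow> 'a loc" where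
  "loc_of p = abs_loc (if qrep_ok p then (Abs_cser (fst p), snd p) else (0, mzero))"

lemma loc_of_ok: "qrep_ok p \<Longrightarrow> loc_of p = abs_loc (Abs_cser (fst p), snd p)"
  by (simp add: loc_of_def)

lemma qrep_okD: "qrep_ok p \<Longrightarrow> cps (fst p)" "qrep_ok p \<Longrightarrow> msupp (snd p) \<subseteq> roots"
  by (simp_all add: qrep_ok_def)

lemma loc_of_qadd: assumes p: "qrep_ok p" and q: "qrep_ok q" shows "loc_of (qadd p q) = loc_of p + loc_of q"
proof -
  have fp: "fin_supp (snd p)" "fin_supp (snd q)" using p q qrep_okD fin_supp_roots by blast+
  have e: "Abs_cser (ser_add (ser_xmono (snd q) (fst p)) (ser_xmono (snd p) (fst q)))
     = xmon (snd q) * Abs_cser (fst p) + xmon (snd p) * Abs_cser (fst q)"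
    using fp qrep_okD[OF p] qrep_okD[OF q] by (simp add: Abs_cser_add cps_xmono Abs_ser_xmono)
  show ?thesis
    unfolding loc_of_ok[OF qrep_ok_qadd[OF p q]] loc_of_ok[OF p] loc_of_ok[OF q] plus_loc.abs_eq
    using e qrep_okD[OF p] qrep_okD[OF q] by (simp add: qadd_def root_part_id madd_def)
qed

lemma loc_of_qmul: assumes p: "qrep_ok p" and q: "qrep_ok q" shows "loc_of (qmul p q) = loc_of p * loc_of q"
  unfolding loc_of_ok[OF qrep_ok_qmul[OF p q]] loc_of_ok[OF p] loc_of_ok[OF q] times_loc.abs_eq
  using qrep_okD[OF p] qrep_okD[OF q] by (simp add: qmul_def madd_def Abs_cser_mul)

lemma loc_of_qneg: assumes p: "qrep_ok p" shows "loc_of (qneg p) = - loc_of p"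
  unfolding loc_of_ok[OF qrep_ok_qneg[OF p]] loc_of_ok[OF p] uminus_loc.abs_eq
  using qrep_okD[OF p] by (simp add: qneg_def Abs_cser_neg)

lemma loc_of_qsub: "qrep_ok p \<Longrightarrow> qrep_ok q \<Longrightarrow> loc_of (qsub p q) = loc_of p - loc_of q"
  by (simp add: qsub_def loc_of_qadd loc_of_qneg qrep_ok_qneg)

lemma loc_of_qzero: "loc_of qzero = 0"
  unfolding loc_of_ok[OF qrep_ok_qzero] zero_loc.abs_eq by (simp add: qzero_def mzero_def Abs_cser_zero)
lemma loc_of_qone: "loc_of qone = 1"
  unfolding loc_of_ok[OF qrep_ok_qone] one_loc.abs_eq by (simp add: qone_def mzero_def Abs_cser_one)

lemma loc_of_qsum: "\<forall>x\<in>set xs. qrep_ok x \<Longrightarrow> loc_of (qsum xs) = sum_list (map loc_of xs)"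
proof (induction xs)
  case Nil thus ?case by (simp add: qsum_def loc_of_qzero)
next
  case (Cons a xs)
  have e: "qsum (a # xs) = qadd a (qsum xs)" by (simp add: qsum_def)
  have a: "qrep_ok a" and xs: "\<forall>x\<in>set xs. qrep_ok x" using Cons.prems by auto
  show ?case unfolding e loc_of_qadd[OF a qrep_ok_qsum[OF xs]] Cons.IH[OF xs] by simp
qed

definition yl :: "lat \<Rightarrow> 'a::comm_ring_1 loc" where "yl g = loc_of (qy g)"
definition unit_mono :: "lat \<Rightarrow> mono" where "unit_mono g = (\<lambda>l. if l = g then 1 else 0)"
definition xl :: "lat \<Rightarrow> 'a::comm_ring_1 loc" where "xl g = abs_loc (xmon (unit_mono g), mzero)"

lemma xl_mult_yl: assumes g: "g \<in> roots" shows "xl g * yl g = 1"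
proof -
  have dlr: "root_part (unit_mono g) = unit_mono g" using g by (auto simp: root_part_def unit_mono_def)
  have m: "madd mzero (unit_mono g) = unit_mono g" by (simp add: madd_def mzero_def unit_mono_def)
  have q: "qy g = (ser_one, unit_mono g)" by (simp add: qy_def unit_mono_def)
  show ?thesis
    unfolding xl_def yl_def loc_of_ok[OF qrep_ok_qy[OF g]] times_loc.abs_eq one_loc.abs_eq loc.abs_eq_iff
    by (simp add: loc_rel_def q Abs_cser_one xmon_root_part_mzero dlr m)
qed

text \<open>The saturation of Jbar in the localization: a fraction lies in it when some monomial in the
  x_gamma times its numerator lies in Jbar.\<close>
definition in_loc_ideal :: "'a::comm_ring_1 \<Rightarrow> (nat \<Rightarrow> nat \<Rightarrow> 'a) \<Rightarrow> 'a loc \<Rightarrow> bool" where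
  "in_loc_ideal ph F z \<longleftrightarrow> (\<exists>f e u. z = abs_loc (f, e) \<and> msupp u \<subseteq> roots \<and> Rep_cser (xmon u * f) \<in> Jbar ph F)"

lemma Jbar_mult: "Rep_cser x \<in> Jbar ph F \<Longrightarrow> Rep_cser (c * x) \<in> Jbar ph F"
  unfolding Jbar_def by (metis Rep_cser closed_mul mem_Collect_eq times_cser.rep_eq)
lemma Jbar_add: "Rep_cser x \<in> Jbar ph F \<Longrightarrow> Rep_cser y \<in> Jbar ph F \<Longrightarrow> Rep_cser (x + y) \<in> Jbar ph F"
  unfolding Jbar_def by (metis closed_add plus_cser.rep_eq)
lemma Jbar_zero: "Rep_cser 0 \<in> Jbar ph F"
  unfolding Jbar_def by (metis closed_zero zero_cser.rep_eq)

lemma msupp_root_part: "msupp (root_part e) \<subseteq> roots"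
  by (auto simp: msupp_def root_part_def)

lemma in_loc_ideal_rep: assumes "in_loc_ideal ph F (abs_loc (f, e))"
  shows "\<exists>u. msupp u \<subseteq> roots \<and> Rep_cser (xmon u * f) \<in> Jbar ph F"
proof -
  obtain f' e' u where h: "abs_loc (f, e) = abs_loc (f', e')" "msupp u \<subseteq> roots" "Rep_cser (xmon u * f') \<in> Jbar ph F"
    using assms unfolding in_loc_ideal_def by blast
  have r: "xmon (root_part e') * f = xmon (root_part e) * f'" using h(1) by (simp add: loc.abs_eq_iff loc_rel_def)
  have "Rep_cser (xmon (madd u (root_part e')) * f) \<in> Jbar ph F"
  proof -
    have "xmon (madd u (root_part e')) * f = xmon u * (xmon (root_part e') * f)"
      using fin_supp_roots[OF h(2)] fin_supp_root_part by (simp add: madd_def xmon_add algebra_simps)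
    also have "\<dots> = xmon u * (xmon (root_part e) * f')" using r by simp
    also have "\<dots> = xmon (root_part e) * (xmon u * f')" by (simp add: algebra_simps)
    finally have "xmon (madd u (root_part e')) * f = xmon (root_part e) * (xmon u * f')" .
    thus ?thesis using Jbar_mult h(3) by metis
  qed
  moreover have "msupp (madd u (root_part e')) \<subseteq> roots" using h(2) msupp_root_part msupp_add by (simp add: madd_def)
  ultimately show ?thesis by blast
qed

lemma loc_abs_surj: "\<exists>f e. (a::'a::comm_ring_1 loc) = abs_loc (f, e)"
proof -
  have "\<exists>x. a = abs_loc x" by (induct a rule: loc.abs_induct) auto
  thus ?thesis by auto
qed

lemma in_loc_ideal_zero: "in_loc_ideal ph F 0"
  unfolding in_loc_ideal_def zero_loc.abs_eq using Jbar_zero by (intro exI[of _ 0] exI[of _ mzero] exI[of _ mzero])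
    (simp add: msupp_def mzero_def)

lemma in_loc_ideal_add: assumes a: "in_loc_ideal ph F a" and b: "in_loc_ideal ph F b" shows "in_loc_ideal ph F (a + b)"
proof -
  obtain f e where fe: "a = abs_loc (f, e)" using loc_abs_surj by blast
  obtain g d where gd: "b = abs_loc (g, d)" using loc_abs_surj by blast
  obtain u where u: "msupp u \<subseteq> roots" "Rep_cser (xmon u * f) \<in> Jbar ph F" using in_loc_ideal_rep a fe by blast
  obtain v where v: "msupp v \<subseteq> roots" "Rep_cser (xmon v * g) \<in> Jbar ph F" using in_loc_ideal_rep b gd by blast
  have "xmon (madd u v) * (xmon (root_part d) * f + xmon (root_part e) * g)
      = (xmon v * xmon (root_part d)) * (xmon u * f) + (xmon u * xmon (root_part e)) * (xmon v * g)"
    using fin_supp_roots[OF u(1)] fin_supp_roots[OF v(1)] by (simp add: madd_def xmon_add algebra_simps)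
  hence "Rep_cser (xmon (madd u v) * (xmon (root_part d) * f + xmon (root_part e) * g)) \<in> Jbar ph F"
    using Jbar_add Jbar_mult u v by metis
  moreover have "msupp (madd u v) \<subseteq> roots" using u v msupp_add by (simp add: madd_def)
  ultimately show ?thesis unfolding in_loc_ideal_def fe gd plus_loc.abs_eq by auto
qed

lemma in_loc_ideal_mult: assumes a: "in_loc_ideal ph F a" shows "in_loc_ideal ph F (c * a)"
proof -
  obtain f e where fe: "a = abs_loc (f, e)" using loc_abs_surj by blast
  obtain g d where gd: "c = abs_loc (g, d)" using loc_abs_surj by blast
  obtain u where u: "msupp u \<subseteq> roots" "Rep_cser (xmon u * f) \<in> Jbar ph F" using in_loc_ideal_rep a fe by blast
  have "xmon u * (g * f) = g * (xmon u * f)" by (simp add: algebra_simps)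
  hence "Rep_cser (xmon u * (g * f)) \<in> Jbar ph F" using Jbar_mult u by metis
  thus ?thesis unfolding in_loc_ideal_def fe gd times_loc.abs_eq using u by auto
qed

lemma in_loc_ideal_minus: "in_loc_ideal ph F a \<Longrightarrow> in_loc_ideal ph F (- a)"
  using in_loc_ideal_mult[of ph F a "-1"] by simp
lemma in_loc_ideal_diff: "in_loc_ideal ph F a \<Longrightarrow> in_loc_ideal ph F b \<Longrightarrow> in_loc_ideal ph F (a - b)"
  by (metis diff_conv_add_uminus in_loc_ideal_add in_loc_ideal_minus)

lemma qeq_iff: assumes p: "qrep_ok p" and q: "qrep_ok q"
  shows "qeq ph F p q \<longleftrightarrow> in_loc_ideal ph F (loc_of p - loc_of q)"
proof -
  have fp: "fin_supp (snd p)" "fin_supp (snd q)" using p q qrep_okD fin_supp_roots by blast+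
  let ?d = "xmon (snd q) * Abs_cser (fst p) - xmon (snd p) * Abs_cser (fst q)"
  have e1: "loc_of p - loc_of q = abs_loc (?d, madd (snd p) (snd q))"
    unfolding loc_of_ok[OF p] loc_of_ok[OF q] minus_loc.abs_eq using qrep_okD[OF p] qrep_okD[OF q] by (simp add: root_part_id)
  have e2: "Rep_cser (xmon u * ?d) = ser_xmono u (ser_diff (ser_xmono (snd q) (fst p)) (ser_xmono (snd p) (fst q)))"
    if "msupp u \<subseteq> roots" for u
  proof -
    have a1: "Rep_cser (xmon (snd q) * Abs_cser (fst p)) = ser_xmono (snd q) (fst p)"
      unfolding Rep_xmon_mult[OF fp(2)] using Abs_cser_inverse[of "fst p"] qrep_okD(1)[OF p] by simp
    have a2: "Rep_cser (xmon (snd p) * Abs_cser (fst q)) = ser_xmono (snd p) (fst q)"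
      unfolding Rep_xmon_mult[OF fp(1)] using Abs_cser_inverse[of "fst q"] qrep_okD(1)[OF q] by simp
    have "Rep_cser ?d = ser_diff (ser_xmono (snd q) (fst p)) (ser_xmono (snd p) (fst q))"
      by (simp only: minus_cser.rep_eq a1 a2)
    thus ?thesis using Rep_xmon_mult fin_supp_roots[OF that] by metis
  qed
  show ?thesis
  proof
    assume "qeq ph F p q"
    then obtain u where "msupp u \<subseteq> roots"
      "ser_xmono u (ser_diff (ser_xmono (snd q) (fst p)) (ser_xmono (snd p) (fst q))) \<in> Jbar ph F"
      unfolding qeq_def by blast
    note u = this
    have "Rep_cser (xmon u * ?d) \<in> Jbar ph F" using e2[OF u(1)] u(2) by simp
    thus "in_loc_ideal ph F (loc_of p - loc_of q)" unfolding e1 in_loc_ideal_def using u(1) by blast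
  next
    assume "in_loc_ideal ph F (loc_of p - loc_of q)"
    then obtain u where "msupp u \<subseteq> roots" "Rep_cser (xmon u * ?d) \<in> Jbar ph F"
      unfolding e1 using in_loc_ideal_rep by blast
    note u = this
    have "ser_xmono u (ser_diff (ser_xmono (snd q) (fst p)) (ser_xmono (snd p) (fst q))) \<in> Jbar ph F"
      using e2[OF u(1)] u(2) by simp
    thus "qeq ph F p q" unfolding qeq_def using u(1) by blast
  qed
qed

definition cser_act :: "(lat \<Rightarrow> lat) \<Rightarrow> 'a::comm_ring_1 cser \<Rightarrow> 'a cser" where
  "cser_act w f = Abs_cser (ser_act w (Rep_cser f))"

lemma Rep_cser_act: "bij w \<Longrightarrow> Rep_cser (cser_act w f) = ser_act w (Rep_cser f)"
  unfolding cser_act_def using cps_act Rep_cser Abs_cser_inverse by (metis mem_Collect_eq)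

lemma cser_act_add: "bij w \<Longrightarrow> cser_act w (a + b) = cser_act w a + cser_act w b"
  by (rule Rep_cser_inject[THEN iffD1]) (simp add: Rep_cser_act plus_cser.rep_eq act_add)
lemma cser_act_mul: "bij w \<Longrightarrow> cser_act w (a * b) = cser_act w a * cser_act w b"
  by (rule Rep_cser_inject[THEN iffD1]) (simp add: Rep_cser_act times_cser.rep_eq act_mul)
lemma cser_act_neg: "bij w \<Longrightarrow> cser_act w (- a) = - cser_act w a"
  by (rule Rep_cser_inject[THEN iffD1]) (simp add: Rep_cser_act uminus_cser.rep_eq act_neg)
lemma cser_act_one: "bij w \<Longrightarrow> cser_act w 1 = 1"
  by (rule Rep_cser_inject[THEN iffD1]) (simp add: Rep_cser_act one_cser.rep_eq act_one)
lemma cser_act_zero: "bij w \<Longrightarrow> cser_act w 0 = 0"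
  by (rule Rep_cser_inject[THEN iffD1]) (simp add: Rep_cser_act zero_cser.rep_eq act_zero)

lemma Rep_xmon: "fin_supp e \<Longrightarrow> Rep_cser (xmon e) = ser_monom e"
  by (simp add: xmon.rep_eq)

lemma fin_supp_comp_inv: "bij w \<Longrightarrow> fin_supp (e \<circ> inv w) = fin_supp e"
proof -
  assume w: "bij w"
  have "inj_on w (msupp e)" using w bij_is_inj inj_on_subset by blast
  thus ?thesis using w by (simp add: msupp_comp_inv finite_image_iff)
qed

lemma cser_act_xmon: "bij w \<Longrightarrow> fin_supp e \<Longrightarrow> cser_act w (xmon e) = xmon (e \<circ> inv w)"
  by (rule Rep_cser_inject[THEN iffD1]) (simp add: Rep_cser_act Rep_xmon act_monom fin_supp_comp_inv)

lemma root_part_comp: "root_perm w \<Longrightarrow> root_part (e \<circ> inv w) = root_part e \<circ> inv w"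
  by (auto simp: root_part_def fun_eq_iff root_perm_inv_roots)

lemma root_perm_bij: "root_perm w \<Longrightarrow> bij w" by (simp add: root_perm_def)

lemma cser_act_xmon_root_part: "root_perm w \<Longrightarrow> cser_act w (xmon (root_part e)) = xmon (root_part (e \<circ> inv w))"
  by (simp add: root_part_comp cser_act_xmon root_perm_bij fin_supp_root_part)

definition loc_act :: "(lat \<Rightarrow> lat) \<Rightarrow> 'a::comm_ring_1 loc \<Rightarrow> 'a loc" where
  "loc_act w z = (if root_perm w then abs_loc (cser_act w (fst (rep_loc z)), snd (rep_loc z) \<circ> inv w) else z)"

lemma loc_rel_act: assumes w: "root_perm w" and r: "loc_rel (f, e) (g, d)"
  shows "loc_rel (cser_act w f, e \<circ> inv w) (cser_act w g, d \<circ> inv w)"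
proof -
  have h: "xmon (root_part d) * f = xmon (root_part e) * g" using r by (simp add: loc_rel_def)
  have "xmon (root_part (d \<circ> inv w)) * cser_act w f = cser_act w (xmon (root_part d) * f)"
    using w by (simp add: cser_act_mul cser_act_xmon_root_part root_perm_bij)
  also have "\<dots> = cser_act w (xmon (root_part e) * g)" using h by simp
  also have "\<dots> = xmon (root_part (e \<circ> inv w)) * cser_act w g"
    using w by (simp add: cser_act_mul cser_act_xmon_root_part root_perm_bij)
  finally show ?thesis by (simp add: loc_rel_def)
qed

lemma loc_act_abs: assumes w: "root_perm w" shows "loc_act w (abs_loc (f, e)) = abs_loc (cser_act w f, e \<circ> inv w)"
proof -
  have "loc_rel (rep_loc (abs_loc (f, e))) (f, e)"
    using loc.abs_eq_iff Quotient3_abs_rep[OF Quotient3_loc] by metis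
  hence "loc_rel (cser_act w (fst (rep_loc (abs_loc (f, e)))), snd (rep_loc (abs_loc (f, e))) \<circ> inv w) (cser_act w f, e \<circ> inv w)"
    using loc_rel_act[OF w] by (metis prod.collapse)
  thus ?thesis unfolding loc_act_def using w by (simp add: loc.abs_eq_iff)
qed

lemma madd_comp: "madd a b \<circ> v = madd (a \<circ> v) (b \<circ> v)"
  by (simp add: madd_def fun_eq_iff)

lemma loc_act_add: assumes w: "root_perm w" shows "loc_act w (a + b) = loc_act w a + loc_act w b"
proof -
  obtain f e where a: "a = abs_loc (f, e)" using loc_abs_surj by blast
  obtain g d where b: "b = abs_loc (g, d)" using loc_abs_surj by blast
  show ?thesis unfolding a b plus_loc.abs_eq using w
    by (simp add: loc_act_abs cser_act_add cser_act_mul cser_act_xmon_root_part root_perm_bij madd_comp plus_loc.abs_eq)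
qed

lemma loc_act_mult: assumes w: "root_perm w" shows "loc_act w (a * b) = loc_act w a * loc_act w b"
proof -
  obtain f e where a: "a = abs_loc (f, e)" using loc_abs_surj by blast
  obtain g d where b: "b = abs_loc (g, d)" using loc_abs_surj by blast
  show ?thesis unfolding a b times_loc.abs_eq using w
    by (simp add: loc_act_abs cser_act_mul root_perm_bij madd_comp times_loc.abs_eq)
qed

lemma loc_act_minus: assumes w: "root_perm w" shows "loc_act w (- a) = - loc_act w a"
proof -
  obtain f e where a: "a = abs_loc (f, e)" using loc_abs_surj by blast
  show ?thesis unfolding a uminus_loc.abs_eq using w
    by (simp add: loc_act_abs cser_act_neg root_perm_bij uminus_loc.abs_eq)
qed

lemma mzero_comp: "mzero \<circ> v = mzero" by (simp add: mzero_def fun_eq_iff)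

lemma loc_act_one: assumes w: "root_perm w" shows "loc_act w 1 = 1"
  unfolding one_loc.abs_eq using w by (simp add: loc_act_abs cser_act_one root_perm_bij mzero_comp)

lemma loc_act_zero: assumes w: "root_perm w" shows "loc_act w 0 = 0"
  unfolding zero_loc.abs_eq using w by (simp add: loc_act_abs cser_act_zero root_perm_bij mzero_comp)

lemma loc_act_diff: "root_perm w \<Longrightarrow> loc_act w (a - b) = loc_act w a - loc_act w b"
  by (metis diff_conv_add_uminus loc_act_add loc_act_minus)

lemma loc_of_qact: assumes w: "root_perm w" and p: "qrep_ok p" shows "loc_of (qact w p) = loc_act w (loc_of p)"
proof -
  have "cser_act w (Abs_cser (fst p)) = Abs_cser (ser_act w (fst p))"
    unfolding cser_act_def using qrep_okD(1)[OF p] Abs_cser_inverse by (metis mem_Collect_eq)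
  thus ?thesis unfolding loc_of_ok[OF qrep_ok_qact[OF w p]] loc_of_ok[OF p] loc_act_abs[OF w]
    by (simp add: qact_def)
qed

lemma qact_qy: assumes w: "root_perm w" shows "qact w (qy g) = qy (w g)"
proof -
  have "(\<lambda>l. if l = g then 1 else 0) \<circ> inv w = (\<lambda>l. if l = w g then 1 else (0::nat))"
  proof
    fix l
    have "(inv w l = g) = (l = w g)" using root_perm_bij[OF w] by (metis bij_inv_eq_iff)
    thus "((\<lambda>l. if l = g then 1 else 0) \<circ> inv w) l = (if l = w g then 1 else (0::nat))" by simp
  qed
  thus ?thesis using w by (simp add: qact_def qy_def act_one root_perm_bij)
qed

lemma loc_act_yl: assumes w: "root_perm w" and g: "g \<in> roots" shows "loc_act w (yl g) = yl (w g)"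
  unfolding yl_def loc_of_qact[OF w qrep_ok_qy[OF g], symmetric] qact_qy[OF w] ..

section \<open>W as a group of matrices over Z[phi]\<close>

type_synonym mat = "(zphi \<times> zphi) \<times> (zphi \<times> zphi)"

definition lin :: "mat \<Rightarrow> lat \<Rightarrow> lat" where
  "lin M l = (zp_add (zp_mul (fst (fst M)) (fst l)) (zp_mul (snd (fst M)) (snd l)),
              zp_add (zp_mul (fst (snd M)) (fst l)) (zp_mul (snd (snd M)) (snd l)))"

definition mmul :: "mat \<Rightarrow> mat \<Rightarrow> mat" where
  "mmul M N = ((zp_add (zp_mul (fst (fst M)) (fst (fst N))) (zp_mul (snd (fst M)) (fst (snd N))),
                zp_add (zp_mul (fst (fst M)) (snd (fst N))) (zp_mul (snd (fst M)) (snd (snd N)))),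
               (zp_add (zp_mul (fst (snd M)) (fst (fst N))) (zp_mul (snd (snd M)) (fst (snd N))),
                zp_add (zp_mul (fst (snd M)) (snd (fst N))) (zp_mul (snd (snd M)) (snd (snd N)))))"

definition mI :: mat where "mI = (((1,0),(0,0)),((0,0),(1,0)))"
definition mA :: mat where "mA = (((-1,0),(0,1)),((0,0),(1,0)))"
definition mB :: mat where "mB = (((1,0),(0,0)),((0,1),(-1,0)))"

definition mdet :: "mat \<Rightarrow> zphi" where
  "mdet M = zp_add (zp_mul (fst (fst M)) (snd (snd M))) (zp_neg (zp_mul (snd (fst M)) (fst (snd M))))"
text \<open>For the matrices of W the determinant is a unit d with d^2 = 1, so d times the adjugate is the
  inverse.\<close>
definition madj :: "mat \<Rightarrow> mat" where
  "madj M = ((zp_mul (mdet M) (snd (snd M)), zp_neg (zp_mul (mdet M) (snd (fst M)))),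
             (zp_neg (zp_mul (mdet M) (fst (snd M))), zp_mul (mdet M) (fst (fst M))))"

lemma zp_simps:
  "zp_add (a, b) (c, d) = (a + c, b + d)"
  "zp_mul (a, b) (c, d) = (a * c + b * d, a * d + b * c + b * d)"
  "zp_neg (a, b) = (- a, - b)"
  by (simp_all add: zp_add_def zp_mul_def zp_neg_def)

lemma lin_apply: "lin ((m11, m12), (m21, m22)) (a, b) = (zp_add (zp_mul m11 a) (zp_mul m12 b), zp_add (zp_mul m21 a) (zp_mul m22 b))"
  by (simp add: lin_def)

lemma mmul_simp: "mmul ((m11, m12), (m21, m22)) ((n11, n12), (n21, n22)) =
   ((zp_add (zp_mul m11 n11) (zp_mul m12 n21), zp_add (zp_mul m11 n12) (zp_mul m12 n22)),
    (zp_add (zp_mul m21 n11) (zp_mul m22 n21), zp_add (zp_mul m21 n12) (zp_mul m22 n22)))"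
  by (simp add: mmul_def)

lemma lin_comp_pt: "lin M (lin N l) = lin (mmul M N) l"
proof -
  obtain m11 m12 m21 m22 where M: "M = ((m11, m12), (m21, m22))" by (metis prod.collapse)
  obtain n11 n12 n21 n22 where N: "N = ((n11, n12), (n21, n22))" by (metis prod.collapse)
  obtain a b where l: "l = (a, b)" by (cases l)
  obtain a1 a2 where a: "a = (a1, a2)" by (cases a)
  obtain b1 b2 where b: "b = (b1, b2)" by (cases b)
  show ?thesis unfolding M N l a b lin_apply mmul_simp
    apply (cases m11, cases m12, cases m21, cases m22, cases n11, cases n12, cases n21, cases n22)
    by (simp add: zp_simps algebra_simps)
qed

lemma lin_comp: "lin M \<circ> lin N = lin (mmul M N)"
  by (rule ext) (simp add: lin_comp_pt)

lemma lin_comp2: "lin M \<circ> (lin N \<circ> f) = lin (mmul M N) \<circ> f"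
  by (simp add: comp_assoc[symmetric] lin_comp)

lemma lin_I: "id = lin mI"
proof
  fix l :: lat
  obtain a b where l: "l = (a, b)" by (cases l)
  obtain a1 a2 where a: "a = (a1, a2)" by (cases a)
  obtain b1 b2 where b: "b = (b1, b2)" by (cases b)
  show "id l = lin mI l" unfolding l a b mI_def lin_apply by (simp add: zp_simps)
qed

lemma lin_eq: "(lin M = lin N) = (M = N)"
proof
  assume h: "lin M = lin N"
  obtain m11 m12 m21 m22 where M: "M = ((m11, m12), (m21, m22))" by (metis prod.collapse)
  obtain n11 n12 n21 n22 where N: "N = ((n11, n12), (n21, n22))" by (metis prod.collapse)
  have "lin M ((1,0),(0,0)) = lin N ((1,0),(0,0))" "lin M ((0,0),(1,0)) = lin N ((0,0),(1,0))" using h by simp_all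
  thus "M = N" unfolding M N lin_apply
    by (cases m11, cases m12, cases m21, cases m22, cases n11, cases n12, cases n21, cases n22) (simp add: zp_simps)
qed simp

lemma s_alpha_lin: "s_alpha = lin mA"
proof
  fix l :: lat
  obtain a b where l: "l = (a, b)" by (cases l)
  obtain a1 a2 where a: "a = (a1, a2)" by (cases a)
  obtain b1 b2 where b: "b = (b1, b2)" by (cases b)
  show "s_alpha l = lin mA l" unfolding l a b mA_def lin_apply s_alpha_def by (simp add: zp_simps)
qed

lemma s_beta_lin: "s_beta = lin mB"
proof
  fix l :: lat
  obtain a b where l: "l = (a, b)" by (cases l)
  obtain a1 a2 where a: "a = (a1, a2)" by (cases a)
  obtain b1 b2 where b: "b = (b1, b2)" by (cases b)
  show "s_beta l = lin mB l" unfolding l a b mB_def lin_apply s_beta_def by (simp add: zp_simps)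
qed

lemma inv_lin: assumes "mmul M N = mI" "mmul N M = mI" shows "inv (lin M) = lin N"
proof (rule inv_unique_comp)
  show "lin M \<circ> lin N = id" using assms by (simp add: lin_comp lin_I)
  show "lin N \<circ> lin M = id" using assms by (simp add: lin_comp lin_I)
qed

lemma bij_lin: "mmul M N = mI \<Longrightarrow> mmul N M = mI \<Longrightarrow> bij (lin M)"
proof -
  assume "mmul M N = mI" "mmul N M = mI"
  hence "lin N \<circ> lin M = id" "lin M \<circ> lin N = id" by (simp_all add: lin_comp lin_I)
  thus ?thesis using o_bij by blast
qed

lemma Wlist_lin: "Wlist = [lin (((1, 0), (0, 0)), ((0, 0), (1, 0))),
     lin (((-1, 0), (0, 1)), ((0, 0), (1, 0))),
     lin (((0, 1), (0, -1)), ((0, 1), (-1, 0))),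
     lin (((0, -1), (1, 0)), ((0, -1), (0, 1))),
     lin (((0, 0), (-1, 0)), ((1, 0), (0, -1))),
     lin (((0, 0), (-1, 0)), ((-1, 0), (0, 0))),
     lin (((1, 0), (0, 0)), ((0, 1), (-1, 0))),
     lin (((-1, 0), (0, 1)), ((0, -1), (0, 1))),
     lin (((0, 1), (0, -1)), ((1, 0), (0, -1))),
     lin (((0, -1), (1, 0)), ((-1, 0), (0, 0)))]"
  unfolding Wlist_def
  by (simp add: upt_rec numeral_eq_Suc s_alpha_lin s_beta_lin lin_comp lin_comp2 mmul_simp zp_simps mA_def mB_def lin_I mI_def)

lemma root_perm_lin: assumes "mmul M (madj M) = mI" "mmul (madj M) M = mI" "lin M ` roots \<subseteq> roots"
  shows "root_perm (lin M)"
proof -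
  have b: "bij (lin M)" using bij_lin assms by blast
  have "lin M ` roots = roots"
    using endo_inj_surj[OF finite_roots assms(3)] b bij_is_inj inj_on_subset by blast
  thus ?thesis using b root_perm_def by blast
qed

lemma roots_explicit: "roots = {((-1, 0), (0, -1)), ((-1, 0), (0, 0)), ((0, -1), (-1, 0)), ((0, -1), (0, -1)), ((0, 0), (-1, 0)), ((0, 0), (1, 0)), ((0, 1), (0, 1)), ((0, 1), (1, 0)), ((1, 0), (0, 0)), ((1, 0), (0, 1))}"
  unfolding roots_def Wgrp_def Wlist_lin by (simp add: alpha_def beta_def lin_apply zp_simps insert_commute)

lemma root_perm_W_elems:
  "root_perm (lin (((1, 0), (0, 0)), ((0, 0), (1, 0))))"
  "root_perm (lin (((-1, 0), (0, 1)), ((0, 0), (1, 0))))"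
  "root_perm (lin (((0, 1), (0, -1)), ((0, 1), (-1, 0))))"
  "root_perm (lin (((0, -1), (1, 0)), ((0, -1), (0, 1))))"
  "root_perm (lin (((0, 0), (-1, 0)), ((1, 0), (0, -1))))"
  "root_perm (lin (((0, 0), (-1, 0)), ((-1, 0), (0, 0))))"
  "root_perm (lin (((1, 0), (0, 0)), ((0, 1), (-1, 0))))"
  "root_perm (lin (((-1, 0), (0, 1)), ((0, -1), (0, 1))))"
  "root_perm (lin (((0, 1), (0, -1)), ((1, 0), (0, -1))))"
  "root_perm (lin (((0, -1), (1, 0)), ((-1, 0), (0, 0))))"
  by (rule root_perm_lin; simp add: madj_def mdet_def mmul_simp zp_simps mI_def roots_explicit lin_apply)+

lemma root_perm_Wlist: "\<forall>w\<in>set Wlist. root_perm w"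
  by (simp add: Wlist_lin root_perm_W_elems)

lemma alpha_root: "alpha \<in> roots" and beta_root: "beta \<in> roots"
  by (simp_all add: roots_explicit alpha_def beta_def)

lemma loc_act_id: "loc_act id z = z"
proof -
  have g: "root_perm id" by (simp add: root_perm_def)
  obtain f e where z: "z = abs_loc (f, e)" using loc_abs_surj by blast
  have "cser_act id f = f" unfolding cser_act_def by (simp add: ser_act_def Rep_cser_inverse)
  thus ?thesis unfolding z loc_act_abs[OF g] by simp
qed

section \<open>The coefficients of X^(i)\<close>

definition qw_ok :: "'a::comm_ring_1 qw \<Rightarrow> bool" where "qw_ok P \<longleftrightarrow> (\<forall>v. qrep_ok (P v))"

lemma qw_ok_delta: "qw_ok (qw_delta w)"
  by (simp add: qw_ok_def qw_delta_def qrep_ok_qone qrep_ok_qzero)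

lemma qw_ok_X: "g \<in> roots \<Longrightarrow> qw_ok (qw_X g s)"
  by (simp add: qw_ok_def qw_X_def qw_smul_def qw_sub_def qw_delta_def qrep_ok_qmul qrep_ok_qy qrep_ok_qsub qrep_ok_qone qrep_ok_qzero)

lemma qw_ok_mul: assumes "qw_ok P" "qw_ok P'" shows "qw_ok (qw_mul P P')"
  using assms root_perm_Wlist unfolding qw_ok_def qw_mul_def
  by (auto intro!: qrep_ok_qsum qrep_ok_qmul qrep_ok_qact)

lemma qw_ok_X_alpha: "qw_ok X_alpha" and qw_ok_X_beta: "qw_ok X_beta"
  by (simp_all add: X_alpha_def X_beta_def qw_ok_X alpha_root beta_root)

lemma qw_ok_Xalt: "qw_ok A \<Longrightarrow> qw_ok B \<Longrightarrow> qw_ok (Xalt A B k)"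
  by (induction k arbitrary: A B) (simp_all add: qw_ok_delta qw_ok_mul)

lemma qrep_ok_Xalt: "qrep_ok (Xalt X_alpha X_beta k v)" "qrep_ok (Xalt X_beta X_alpha k v)"
  using qw_ok_Xalt qw_ok_X_alpha qw_ok_X_beta unfolding qw_ok_def by blast+

lemma loc_of_qw_delta: "loc_of (qw_delta w v) = (if v = w then 1 else 0)"
  by (simp add: qw_delta_def loc_of_qone loc_of_qzero)

lemma loc_of_qw_X: "g \<in> roots \<Longrightarrow> loc_of (qw_X g s v) = yl g * ((if v = id then 1 else 0) - (if v = s then 1 else 0))"
  by (simp add: qw_X_def qw_smul_def qw_sub_def loc_of_qmul loc_of_qsub qrep_ok_qy qrep_ok_qsub qw_ok_delta[unfolded qw_ok_def] loc_of_qw_delta yl_def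
       del: qw_delta_def)

lemma loc_of_qw_mul: assumes "qw_ok P" "qw_ok P'"
  shows "loc_of (qw_mul P P' u) = sum_list (map (\<lambda>w. loc_of (P w) * loc_act w (loc_of (P' (inv w \<circ> u)))) Wlist)"
proof -
  have ok: "\<forall>x\<in>set (map (\<lambda>w. qmul (P w) (qact w (P' (inv w \<circ> u)))) Wlist). qrep_ok x"
    using assms root_perm_Wlist unfolding qw_ok_def by (auto intro!: qrep_ok_qmul qrep_ok_qact)
  show ?thesis unfolding qw_mul_def loc_of_qsum[OF ok] map_map
  proof (rule arg_cong[where f = sum_list], rule map_cong[OF refl])
    fix w assume "w \<in> set Wlist"
    hence "root_perm w" using root_perm_Wlist by blast
    thus "(loc_of \<circ> (\<lambda>w. qmul (P w) (qact w (P' (inv w \<circ> u))))) w = loc_of (P w) * loc_act w (loc_of (P' (inv w \<circ> u)))"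
      using assms unfolding qw_ok_def by (simp add: loc_of_qmul loc_of_qact qrep_ok_qact)
  qed
qed

lemma sum_list_two_support:
  assumes "distinct xs" "a \<in> set xs" "b \<in> set xs" "a \<noteq> b" "\<forall>w\<in>set xs. w \<noteq> a \<and> w \<noteq> b \<longrightarrow> f w = 0"
  shows "sum_list (map f xs) = f a + (f b :: 'b::comm_monoid_add)"
proof -
  have "sum_list (map f xs) = sum f (set xs)" using assms(1) by (simp add: sum_list_distinct_conv_sum_set)
  also have "\<dots> = sum f {a, b}" using assms by (intro sum.mono_neutral_right) auto
  also have "\<dots> = f a + f b" using assms(4) by simp
  finally show ?thesis .
qed

lemma distinct_Wlist: "distinct Wlist"
  by (simp add: Wlist_lin lin_eq)

lemma id_in_Wlist: "id \<in> set Wlist" by (simp add: Wlist_lin lin_I mI_def)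
lemma s_alpha_in_Wlist: "s_alpha \<in> set Wlist" by (simp add: Wlist_lin s_alpha_lin mA_def lin_eq)
lemma s_beta_in_Wlist: "s_beta \<in> set Wlist" by (simp add: Wlist_lin s_beta_lin mB_def lin_eq)
lemma s_alpha_ne_id: "s_alpha \<noteq> id" by (simp add: s_alpha_lin lin_I lin_eq mA_def mI_def)
lemma s_beta_ne_id: "s_beta \<noteq> id" by (simp add: s_beta_lin lin_I lin_eq mB_def mI_def)

lemma inv_s_alpha: "inv s_alpha = s_alpha"
  by (simp add: s_alpha_lin mA_def inv_lin mmul_simp zp_simps mI_def)
lemma inv_s_beta: "inv s_beta = s_beta"
  by (simp add: s_beta_lin mB_def inv_lin mmul_simp zp_simps mI_def)

lemma loc_of_qw_mul_X:
  assumes g: "g \<in> roots" and s: "s \<in> set Wlist" "s \<noteq> id" "inv s = s" and B: "qw_ok B"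
  shows "loc_of (qw_mul (qw_X g s) B u) = yl g * loc_of (B u) - yl g * loc_act s (loc_of (B (s \<circ> u)))"
proof -
  have "loc_of (qw_mul (qw_X g s) B u) = sum_list (map (\<lambda>w. loc_of (qw_X g s w) * loc_act w (loc_of (B (inv w \<circ> u)))) Wlist)"
    using loc_of_qw_mul[OF qw_ok_X[OF g] B] .
  also have "\<dots> = loc_of (qw_X g s id) * loc_act id (loc_of (B (inv id \<circ> u))) + loc_of (qw_X g s s) * loc_act s (loc_of (B (inv s \<circ> u)))"
    using s distinct_Wlist id_in_Wlist by (intro sum_list_two_support) (auto simp: loc_of_qw_X[OF g])
  also have "\<dots> = yl g * loc_of (B u) - yl g * loc_act s (loc_of (B (s \<circ> u)))"
    using s by (simp add: loc_of_qw_X[OF g] loc_act_id)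
  finally show ?thesis .
qed

definition Xa_coeff :: "nat \<Rightarrow> (lat \<Rightarrow> lat) \<Rightarrow> 'a::comm_ring_1 loc" where
  "Xa_coeff i u = loc_of (Xalt X_alpha X_beta i u)"
definition Xb_coeff :: "nat \<Rightarrow> (lat \<Rightarrow> lat) \<Rightarrow> 'a::comm_ring_1 loc" where
  "Xb_coeff i u = loc_of (Xalt X_beta X_alpha i u)"

lemma Xa_coeff_0: "Xa_coeff 0 u = (if u = id then 1 else 0)"
  and Xb_coeff_0: "Xb_coeff 0 u = (if u = id then 1 else 0)"
  by (simp_all add: Xa_coeff_def Xb_coeff_def loc_of_qw_delta)

lemma Xa_coeff_Suc:
  "Xa_coeff (Suc k) u = yl alpha * Xb_coeff k u - yl alpha * loc_act s_alpha (Xb_coeff k (s_alpha \<circ> u))"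
  using loc_of_qw_mul_X[OF alpha_root s_alpha_in_Wlist s_alpha_ne_id inv_s_alpha
      qw_ok_Xalt[OF qw_ok_X_beta qw_ok_X_alpha]]
  by (simp add: X_alpha_def Xa_coeff_def Xb_coeff_def)

lemma Xb_coeff_Suc:
  "Xb_coeff (Suc k) u = yl beta * Xa_coeff k u - yl beta * loc_act s_beta (Xa_coeff k (s_beta \<circ> u))"
  using loc_of_qw_mul_X[OF beta_root s_beta_in_Wlist s_beta_ne_id inv_s_beta
      qw_ok_Xalt[OF qw_ok_X_alpha qw_ok_X_beta]]
  by (simp add: X_beta_def Xa_coeff_def Xb_coeff_def)

text \<open>Evaluating a coefficient at an explicit group element: unfold the recursion, compute the
  group elements as matrices and move the action inside, down to the y of explicit roots.\<close>
lemmas Xcoeff_eval_simps[no_atp] = Xa_coeff_Suc Xb_coeff_Suc Xa_coeff_0 Xb_coeff_0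
  numeral_eq_Suc saw_def sbw_def alt.simps s_alpha_lin s_beta_lin mA_def mB_def lin_comp mmul_simp
  zp_simps lin_I mI_def lin_eq lin_apply loc_act_add loc_act_mult loc_act_diff loc_act_minus
  loc_act_one loc_act_zero root_perm_W_elems loc_act_yl roots_explicit alpha_def beta_def

lemma saw_in_Wlist: "k < 6 \<Longrightarrow> saw k \<in> set Wlist"
  by (simp add: Wlist_def saw_def)

lemma sbw_in_Wlist: "0 < k \<Longrightarrow> k < 5 \<Longrightarrow> sbw k \<in> set Wlist"
  by (auto simp: Wlist_def sbw_def)

lemma root_perm_saw: "k < 6 \<Longrightarrow> root_perm (saw k)"
  using root_perm_Wlist saw_in_Wlist by blast

lemma root_perm_sbw: "k < 5 \<Longrightarrow> root_perm (sbw k)"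
  using root_perm_Wlist sbw_in_Wlist root_perm_saw[of 0] by (cases "k = 0") (auto simp: saw_def sbw_def)

definition S03_alpha :: "'a::comm_ring_1 qrep \<Rightarrow> 'a qrep" where
  "S03_alpha u = qsum (map (\<lambda>k. qact (saw k) u) [0..<4])"

text \<open>Each kappa_ab i is obtained from kappa_ba i by exchanging alpha and beta. All six are needed
  for the defining identity; the theorem records three of them.\<close>
definition kappa_ab :: "nat \<Rightarrow> 'a::comm_ring_1 qrep" where
  "kappa_ab i = (if i = 3 then qsub (S03_alpha yab) (qmul (qy beta) (qact (saw 3) (qy beta)))
     else if i = 2 then
         (qneg (qmul (qy beta)
            (qsub (qadd (qsub (qsub (qadd (qact (saw 1) yab) (qact (saw 2) yab))
                                    (qact (sbw 2) yab))
                              (qact (sbw 3) yab))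
                        (qmul (qy alpha) (qact (sbw 3) (qy alpha))))
                  (qmul (qact (saw 2) (qy alpha)) (qact (saw 3) (qy beta))))))
     else
         (qsub (qsub
            (qneg (qmul (qmul (qact (saw 1) yab) (qact (saw 3) (qy beta)))
                        (qsub (qact (saw 3) (qy alpha)) (qy beta))))
            (qmul (qmul yab (qact (sbw 2) (qy beta)))
                  (qsub (qact (sbw 2) (qy alpha)) (qact (sbw 3) (qy alpha)))))
            (qmul (qmul (qmul (qy beta) (qact (saw 1) (qy beta))) (qact (saw 2) (qy alpha)))
                  (qact (saw 3) (qy beta)))))"

definition kappa_ba :: "nat \<Rightarrow> 'a::comm_ring_1 qrep" where
  "kappa_ba i = (if i = 3 then qsub (S03_beta yab) (qmul (qy alpha) (qact (sbw 3) (qy alpha)))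
     else if i = 2 then
         (qneg (qmul (qy alpha)
            (qsub (qadd (qsub (qsub (qadd (qact (sbw 1) yab) (qact (sbw 2) yab))
                                    (qact (saw 2) yab))
                              (qact (saw 3) yab))
                        (qmul (qy beta) (qact (saw 3) (qy beta))))
                  (qmul (qact (sbw 2) (qy beta)) (qact (sbw 3) (qy alpha))))))
     else
         (qsub (qsub
            (qneg (qmul (qmul (qact (sbw 1) yab) (qact (sbw 3) (qy alpha)))
                        (qsub (qact (sbw 3) (qy beta)) (qy alpha))))
            (qmul (qmul yab (qact (saw 2) (qy alpha)))
                  (qsub (qact (saw 2) (qy beta)) (qact (saw 3) (qy beta)))))
            (qmul (qmul (qmul (qy alpha) (qact (sbw 1) (qy alpha))) (qact (sbw 2) (qy beta)))
                  (qact (sbw 3) (qy alpha)))))"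

lemmas qrep_ok_simps = qrep_ok_qsub qrep_ok_qadd qrep_ok_qmul qrep_ok_qneg qrep_ok_qact
  qrep_ok_qy qrep_ok_qsum alpha_root beta_root root_perm_saw root_perm_sbw

lemma qrep_ok_kappa_ab: "qrep_ok (kappa_ab i)"
  unfolding kappa_ab_def S03_alpha_def yab_def by (simp add: qrep_ok_simps)

lemma qrep_ok_kappa_ba: "qrep_ok (kappa_ba i)"
  unfolding kappa_ba_def S03_beta_def yab_def by (simp add: qrep_ok_simps)

definition kappa_comb :: "(nat \<Rightarrow> 'a::comm_ring_1 loc) \<Rightarrow> (nat \<Rightarrow> 'a loc) \<Rightarrow> (lat \<Rightarrow> lat) \<Rightarrow> 'a loc" where
  "kappa_comb K L u = (K 1 * Xa_coeff 1 u - L 1 * Xb_coeff 1 u) + (K 2 * Xa_coeff 2 u - L 2 * Xb_coeff 2 u)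
                    + (K 3 * Xa_coeff 3 u - L 3 * Xb_coeff 3 u)"

lemma kappa_comb_diff: "kappa_comb K L u - kappa_comb K' L' u = kappa_comb (\<lambda>i. K i - K' i) (\<lambda>i. L i - L' i) u"
  by (simp add: kappa_comb_def algebra_simps)

lemma qw_sum_apply: "qw_sum xs u = qsum (map (\<lambda>P. P u) xs)"
  by (induction xs) (simp_all add: qw_sum_def qsum_def qw_add_def qw_zero_def)

lemma kappa_identity_iff:
  assumes ok: "\<forall>i\<in>{1..3}. qrep_ok (kab i) \<and> qrep_ok (kba i)"
  shows "kappa_identity ph F kab kba \<longleftrightarrow>
    (\<forall>u\<in>set Wlist. in_loc_ideal ph F (Xa_coeff 5 u - Xb_coeff 5 u - kappa_comb (\<lambda>i. loc_of (kab i)) (\<lambda>i. loc_of (kba i)) u))"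
proof -
  have "qeq ph F (qw_sub (Xalt X_alpha X_beta 5) (Xalt X_beta X_alpha 5) u)
          (qw_sum (map (\<lambda>i. qw_sub (qw_smul (kab i) (Xalt X_alpha X_beta i)) (qw_smul (kba i) (Xalt X_beta X_alpha i))) [1..<4]) u)
     \<longleftrightarrow> in_loc_ideal ph F (Xa_coeff 5 u - Xb_coeff 5 u - kappa_comb (\<lambda>i. loc_of (kab i)) (\<lambda>i. loc_of (kba i)) u)" for u
  proof -
    define P where "P i = qsub (qmul (kab i) (Xalt X_alpha X_beta i u)) (qmul (kba i) (Xalt X_beta X_alpha i u))" for i
    have rhs: "qw_sum (map (\<lambda>i. qw_sub (qw_smul (kab i) (Xalt X_alpha X_beta i)) (qw_smul (kba i) (Xalt X_beta X_alpha i))) [1..<4]) u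
         = qsum [P 1, P 2, P 3]"
    proof -
      have "[1..<4] = [1, 2, 3::nat]" by (simp add: upt_rec)
      thus ?thesis unfolding qw_sum_apply by (simp add: qw_sub_def qw_smul_def P_def)
    qed
    have ok_P: "\<forall>x\<in>set [P 1, P 2, P 3]. qrep_ok x"
      using ok by (simp add: P_def qrep_ok_qsub qrep_ok_qmul qrep_ok_Xalt del: Xalt.simps)
    have loc_P: "loc_of (P i) = loc_of (kab i) * Xa_coeff i u - loc_of (kba i) * Xb_coeff i u" if "i \<in> {1..3}" for i
      using ok that by (simp add: P_def qrep_ok_qmul qrep_ok_Xalt loc_of_qsub loc_of_qmul Xa_coeff_def Xb_coeff_def)
    have loc_rhs: "loc_of (qsum [P 1, P 2, P 3]) = kappa_comb (\<lambda>i. loc_of (kab i)) (\<lambda>i. loc_of (kba i)) u"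
      unfolding loc_of_qsum[OF ok_P] by (simp add: loc_P kappa_comb_def add.assoc)
    have loc_lhs: "loc_of (qw_sub (Xalt X_alpha X_beta 5) (Xalt X_beta X_alpha 5) u) = Xa_coeff 5 u - Xb_coeff 5 u"
      by (simp add: qw_sub_def loc_of_qsub qrep_ok_Xalt Xa_coeff_def Xb_coeff_def)
    have ok_lhs: "qrep_ok (qw_sub (Xalt X_alpha X_beta 5) (Xalt X_beta X_alpha 5) u)"
      by (simp add: qw_sub_def qrep_ok_qsub qrep_ok_Xalt)
    show ?thesis unfolding rhs qeq_iff[OF ok_lhs qrep_ok_qsum[OF ok_P]] loc_lhs loc_rhs ..
  qed
  thus ?thesis unfolding kappa_identity_def qw_eq_def Wgrp_def by blast
qed

section \<open>Existence\<close>

lemma kappa_expansion: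
  "\<forall>u\<in>set Wlist. Xa_coeff 5 u - Xb_coeff 5 u = kappa_comb (\<lambda>i. loc_of (kappa_ab i)) (\<lambda>i. loc_of (kappa_ba i)) u"
  unfolding Wlist_lin list.set ball_simps
  by (intro conjI TrueI;
      simp add: kappa_comb_def kappa_ab_def kappa_ba_def S03_alpha_def S03_beta_def yab_def
        loc_of_qsub loc_of_qadd loc_of_qmul loc_of_qneg loc_of_qact loc_of_qsum qrep_ok_simps
        qact_qy yl_def[symmetric] upt_rec Xcoeff_eval_simps,
      (simp add: algebra_simps)?)

lemma kappa_identity_kappa: "kappa_identity ph F kappa_ab kappa_ba"
proof -
  have ok: "\<forall>i\<in>{1..3}. qrep_ok (kappa_ab i) \<and> qrep_ok (kappa_ba i)"
    by (simp add: qrep_ok_kappa_ab qrep_ok_kappa_ba)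
  show ?thesis unfolding kappa_identity_iff[OF ok]
  proof
    fix u :: "lat \<Rightarrow> lat" assume "u \<in> set Wlist"
    hence "(Xa_coeff 5 u :: 'a loc) - Xb_coeff 5 u = kappa_comb (\<lambda>i. loc_of (kappa_ab i)) (\<lambda>i. loc_of (kappa_ba i)) u"
      using kappa_expansion by blast
    thus "in_loc_ideal ph F (Xa_coeff 5 u - Xb_coeff 5 u
            - kappa_comb (\<lambda>i. loc_of (kappa_ab i)) (\<lambda>i. loc_of (kappa_ba i)) u)"
      by (simp add: in_loc_ideal_zero)
  qed
qed

section \<open>Uniqueness\<close>

text \<open>Triangularity: the coefficient of delta_w in X_I vanishes if w is longer than I, or as long
  as I without I being a reduced word for w.\<close>
lemma Xcoeff_vanish:
  "Xa_coeff 1 (saw 3) = 0" "Xa_coeff 2 (saw 3) = 0" "Xb_coeff 1 (saw 3) = 0" "Xb_coeff 2 (saw 3) = 0"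
  "Xb_coeff 3 (saw 3) = 0"
  "Xa_coeff 1 (sbw 3) = 0" "Xa_coeff 2 (sbw 3) = 0" "Xb_coeff 1 (sbw 3) = 0" "Xb_coeff 2 (sbw 3) = 0"
  "Xa_coeff 3 (sbw 3) = 0"
  "Xa_coeff 1 (saw 2) = 0" "Xb_coeff 1 (saw 2) = 0" "Xb_coeff 2 (saw 2) = 0"
  "Xa_coeff 1 (sbw 2) = 0" "Xb_coeff 1 (sbw 2) = 0" "Xa_coeff 2 (sbw 2) = 0"
  "Xb_coeff 1 (saw 1) = 0" "Xa_coeff 1 (sbw 1) = 0"
  by (simp_all add: Xcoeff_eval_simps)

lemma dvd_one_mult: "a dvd 1 \<Longrightarrow> b dvd 1 \<Longrightarrow> a * b dvd (1::'a::comm_semiring_1)"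
  using mult_dvd_mono[of a 1 b 1] by simp

lemma yl_dvd_one: "g \<in> roots \<Longrightarrow> yl g dvd 1"
  by (rule dvdI[of _ _ "xl g"]) (simp add: mult.commute xl_mult_yl)

lemma Xcoeff_leading_dvd_one:
  "Xa_coeff 1 (saw 1) dvd 1" "Xa_coeff 2 (saw 2) dvd 1" "Xa_coeff 3 (saw 3) dvd 1"
  "Xb_coeff 1 (sbw 1) dvd 1" "Xb_coeff 2 (sbw 2) dvd 1" "Xb_coeff 3 (sbw 3) dvd 1"
  by (simp_all add: Xcoeff_eval_simps dvd_one_mult yl_dvd_one)

lemma in_loc_ideal_mult_right: "in_loc_ideal ph F a \<Longrightarrow> in_loc_ideal ph F (a * c)"
  using in_loc_ideal_mult[of ph F a c] by (simp add: mult.commute)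

lemma in_loc_ideal_cancel_unit:
  assumes "in_loc_ideal ph F (d * a + r)" "in_loc_ideal ph F r" "a dvd 1"
  shows "in_loc_ideal ph F d"
proof -
  obtain c where c: "1 = a * c" using assms(3) by (rule dvdE)
  have "c * (d * a + r) - c * r = d * (a * c)" by (simp add: algebra_simps)
  hence "d = c * (d * a + r) - c * r" using c by simp
  thus ?thesis using in_loc_ideal_diff[OF in_loc_ideal_mult in_loc_ideal_mult] assms by metis
qed

lemma kappa_comb_coeffs_in_loc_ideal:
  assumes comb: "\<forall>u\<in>set Wlist. in_loc_ideal ph F (kappa_comb K L u)"
  shows "\<forall>i\<in>{1..3}. in_loc_ideal ph F (K i) \<and> in_loc_ideal ph F (L i)"
proof -
  let ?I = "in_loc_ideal ph F"
  have lincomb: "?I (a * x - b * y)" if "?I a" "?I b" for a b x y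
    using that by (intro in_loc_ideal_diff in_loc_ideal_mult_right)
  have step: "?I c" if "kappa_comb K L u = c * a + r" "u \<in> set Wlist" "?I r" "a dvd 1" for u c a r
  proof (rule in_loc_ideal_cancel_unit[OF _ that(3,4)])
    show "?I (c * a + r)" unfolding that(1)[symmetric] using comb that(2) by blast
  qed
  have K3: "?I (K 3)"
    by (rule step[of "saw 3" _ "Xa_coeff 3 (saw 3)" 0]) (simp_all add: kappa_comb_def Xcoeff_vanish Xcoeff_vanish[unfolded One_nat_def] saw_in_Wlist
        in_loc_ideal_zero Xcoeff_leading_dvd_one Xcoeff_leading_dvd_one[unfolded One_nat_def])
  have L3: "?I (L 3)"
    by (rule step[of "sbw 3" _ "- Xb_coeff 3 (sbw 3)" 0]) (simp_all add: kappa_comb_def Xcoeff_vanish Xcoeff_vanish[unfolded One_nat_def]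
        sbw_in_Wlist in_loc_ideal_zero Xcoeff_leading_dvd_one Xcoeff_leading_dvd_one[unfolded One_nat_def])
  have K2: "?I (K 2)"
    by (rule step[of "saw 2" _ "Xa_coeff 2 (saw 2)" "K 3 * Xa_coeff 3 (saw 2) - L 3 * Xb_coeff 3 (saw 2)"])
      (simp_all add: kappa_comb_def Xcoeff_vanish Xcoeff_vanish[unfolded One_nat_def] saw_in_Wlist lincomb K3 L3 Xcoeff_leading_dvd_one Xcoeff_leading_dvd_one[unfolded One_nat_def])
  have L2: "?I (L 2)"
    by (rule step[of "sbw 2" _ "- Xb_coeff 2 (sbw 2)" "K 3 * Xa_coeff 3 (sbw 2) - L 3 * Xb_coeff 3 (sbw 2)"])
      (simp_all add: kappa_comb_def Xcoeff_vanish Xcoeff_vanish[unfolded One_nat_def] sbw_in_Wlist lincomb K3 L3 Xcoeff_leading_dvd_one Xcoeff_leading_dvd_one[unfolded One_nat_def])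
  have K1: "?I (K 1)"
    by (rule step[of "saw 1" _ "Xa_coeff 1 (saw 1)" "(K 2 * Xa_coeff 2 (saw 1) - L 2 * Xb_coeff 2 (saw 1))
                                  + (K 3 * Xa_coeff 3 (saw 1) - L 3 * Xb_coeff 3 (saw 1))"])
      (simp_all add: kappa_comb_def Xcoeff_vanish Xcoeff_vanish[unfolded One_nat_def] saw_in_Wlist lincomb K2 L2 K3 L3 in_loc_ideal_add
        Xcoeff_leading_dvd_one Xcoeff_leading_dvd_one[unfolded One_nat_def])
  have L1: "?I (L 1)"
    by (rule step[of "sbw 1" _ "- Xb_coeff 1 (sbw 1)" "(K 2 * Xa_coeff 2 (sbw 1) - L 2 * Xb_coeff 2 (sbw 1))
                                  + (K 3 * Xa_coeff 3 (sbw 1) - L 3 * Xb_coeff 3 (sbw 1))"])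
      (simp_all add: kappa_comb_def Xcoeff_vanish Xcoeff_vanish[unfolded One_nat_def] sbw_in_Wlist lincomb K2 L2 K3 L3 in_loc_ideal_add
        Xcoeff_leading_dvd_one Xcoeff_leading_dvd_one[unfolded One_nat_def])
  show ?thesis using K1 K2 K3 L1 L2 L3 by (auto simp: numeral_eq_Suc atLeastAtMostSuc_conv)
qed

lemma kappa_identity_unique:
  assumes ok: "\<forall>i\<in>{1..3}. qrep_ok (kab i) \<and> qrep_ok (kba i)" and kid: "kappa_identity ph F kab kba"
  shows "\<forall>i\<in>{1..3}. qeq ph F (kab i) (kappa_ab i) \<and> qeq ph F (kba i) (kappa_ba i)"
proof -
  let ?dA = "\<lambda>i. loc_of (kappa_ab i) - loc_of (kab i)" and ?dB = "\<lambda>i. loc_of (kappa_ba i) - loc_of (kba i)"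
  have "in_loc_ideal ph F (kappa_comb ?dA ?dB u)" if "u \<in> set Wlist" for u
  proof -
    have "in_loc_ideal ph F (Xa_coeff 5 u - Xb_coeff 5 u - kappa_comb (\<lambda>i. loc_of (kab i)) (\<lambda>i. loc_of (kba i)) u)"
      using kid that unfolding kappa_identity_iff[OF ok] by blast
    also have "Xa_coeff 5 u - Xb_coeff 5 u = kappa_comb (\<lambda>i. loc_of (kappa_ab i)) (\<lambda>i. loc_of (kappa_ba i)) u"
      using kappa_expansion that by blast
    finally show ?thesis by (simp only: kappa_comb_diff)
  qed
  hence coeffs: "\<forall>i\<in>{1..3}. in_loc_ideal ph F (?dA i) \<and> in_loc_ideal ph F (?dB i)"
    by (intro kappa_comb_coeffs_in_loc_ideal ballI)
  show ?thesis
  proof (intro ballI)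
    fix i assume i: "i \<in> {1..3::nat}"
    have "in_loc_ideal ph F (- ?dA i)" "in_loc_ideal ph F (- ?dB i)"
      using coeffs i in_loc_ideal_minus by blast+
    moreover have "qrep_ok (kab i)" "qrep_ok (kba i)" using ok i by auto
    ultimately show "qeq ph F (kab i) (kappa_ab i) \<and> qeq ph F (kba i) (kappa_ba i)"
      by (simp add: qeq_iff qrep_ok_kappa_ab qrep_ok_kappa_ba)
  qed
qed

theorem mainTheorem16:
  fixes ph :: "'a::idom" and F :: "nat \<Rightarrow> nat \<Rightarrow> 'a"
  assumes R_contains_Zphi: "ph ^ 2 = ph + 1"
      and R_contains_Zphi_inj: "\<forall>a b :: int. of_int a + of_int b * ph = (0::'a) \<longrightarrow> a = 0 \<and> b = 0"
      and F_fgl: "fgl F"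
  shows
   "(\<exists>kab kba. (\<forall>i\<in>{1..3}. qrep_ok (kab i) \<and> qrep_ok (kba i)) \<and> kappa_identity ph F kab kba)
    \<and>
    (\<forall>kab kba. (\<forall>i\<in>{1..3}. qrep_ok (kab i) \<and> qrep_ok (kba i)) \<and> kappa_identity ph F kab kba \<longrightarrow>
       qeq ph F (kba 3)
         (qsub (S03_beta yab) (qmul (qy alpha) (qact (sbw 3) (qy alpha))))
     \<and> qeq ph F (kab 2)
         (qneg (qmul (qy beta)
            (qsub (qadd (qsub (qsub (qadd (qact (saw 1) yab) (qact (saw 2) yab))
                                    (qact (sbw 2) yab))
                              (qact (sbw 3) yab))
                        (qmul (qy alpha) (qact (sbw 3) (qy alpha))))
                  (qmul (qact (saw 2) (qy alpha)) (qact (saw 3) (qy beta))))))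
     \<and> qeq ph F (kba 1)
         (qsub (qsub
            (qneg (qmul (qmul (qact (sbw 1) yab) (qact (sbw 3) (qy alpha)))
                        (qsub (qact (sbw 3) (qy beta)) (qy alpha))))
            (qmul (qmul yab (qact (saw 2) (qy alpha)))
                  (qsub (qact (saw 2) (qy beta)) (qact (saw 3) (qy beta)))))
            (qmul (qmul (qmul (qy alpha) (qact (sbw 1) (qy alpha))) (qact (sbw 2) (qy beta)))
                  (qact (sbw 3) (qy alpha)))))"
proof -
  have "\<exists>kab kba. (\<forall>i\<in>{1..3}. qrep_ok (kab i) \<and> qrep_ok (kba i)) \<and> kappa_identity ph F kab kba"
    using qrep_ok_kappa_ab qrep_ok_kappa_ba kappa_identity_kappa by blast
  moreover have "qeq ph F (kba 3) (kappa_ba 3) \<and> qeq ph F (kab 2) (kappa_ab 2) \<and> qeq ph F (kba 1) (kappa_ba 1)"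
    if "\<forall>i\<in>{1..3}. qrep_ok (kab i) \<and> qrep_ok (kba i)" "kappa_identity ph F kab kba" for kab kba
    using kappa_identity_unique[OF that] by simp
  ultimately show ?thesis by (simp add: kappa_ab_def kappa_ba_def) blast
qed

end
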